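(* Let $d_2,d_3\ge 2$, $k\ge 1$ and $d_1=d_2d_3-k\ge 1$, and let $H=\mathbb{C}^{d_1}\otimes\mathbb{C}^{d_2}\otimes\mathbb{C}^{d_3}$. Let $|\Phi\rangle,|\Psi\rangle\in H$ satisfy $\mathrm{rank}(\rho^{A_1}_\Phi)=\mathrm{rank}(\rho^{A_1}_\Psi)=d_1$. Then $|\Phi\rangle$ and $|\Psi\rangle$ are SLOCC equivalent if and only if $\mathcal{T}^{A_1}(\Phi)=\mathcal{T}^{A_1}(\Psi)$.
   Context: The three factors are held by parties $A_1,A_2,A_3$; $\rho^{A_1}_\Phi$ is the reduced density operator of $|\Phi\rangle\langle\Phi|$ on the first factor. Two states in a multipartite space are SLOCC equivalent if one is obtained from the other by applying $L_1\otimes L_2\otimes L_3$ with each $L_i$ an invertible linear operator on the corresponding factor. Definition of $\mathcal{T}^{A_1}$: for $|\Phi\rangle\in H$ with $\mathrm{rank}(\rho^{A_1}_\Phi)=d_1$, write $|\Phi\rangle=\sum_{i=1}^{d_1}|i\rangle^{A_1}|\phi_i\rangle^{A_2A_3}$ for a basis $\{|i\rangle\}$ of $\mathbb{C}^{d_1}$ (so the $|\phi_i\rangle$ are linearly independent and their span has orthogonal complement of dimension $k$ in $\mathbb{C}^{d_2}\otimes\mathbb{C}^{d_3}$). Let $\{|\phi_i^\perp\rangle:1\le i\le k\}$ be any basis of $\mathrm{span}\{|\phi_i\rangle:1\le i\le d_1\}^\perp$. Then $\mathcal{T}^{A_1}(\Phi)$ is the SLOCC equivalence class in $\mathbb{C}^{k}\otimes\mathbb{C}^{d_2}\otimes\mathbb{C}^{d_3}$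 of $\sum_{i=1}^k|i\rangle|\phi_i^\perp\rangle$, where $\{|i\rangle:1\le i\le k\}$ is a basis of $\mathbb{C}^k$; this class does not depend on the choices of bases. *)

theory Defs
  imports "Jordan_Normal_Form.DL_Rank"
begin

type_synonym tensor3 = "nat \<Rightarrow> nat \<Rightarrow> nat \<Rightarrow> complex"
type_synonym tensor2 = "nat \<Rightarrow> nat \<Rightarrow> complex"

text \<open>A vector of C^a (x) C^b (x) C^c, in coordinates w.r.t. the standard product basis;
  entries outside the index range are zero.\<close>
definition in_tensor3 :: "nat \<Rightarrow> nat \<Rightarrow> nat \<Rightarrow> tensor3 \<Rightarrow> bool" where
  "in_tensor3 a b c T \<longleftrightarrow> (\<forall>i j l. \<not> (i < a \<and> j < b \<and> l < c) \<longrightarrow> T i j l = 0)"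

definition in_tensor2 :: "nat \<Rightarrow> nat \<Rightarrow> tensor2 \<Rightarrow> bool" where
  "in_tensor2 b c w \<longleftrightarrow> (\<forall>j l. \<not> (j < b \<and> l < c) \<longrightarrow> w j l = 0)"

definition local_op :: "nat \<Rightarrow> nat \<Rightarrow> nat \<Rightarrow> complex mat \<Rightarrow> complex mat \<Rightarrow> complex mat \<Rightarrow> tensor3 \<Rightarrow> tensor3" where
  "local_op a b c L1 L2 L3 T = (\<lambda>i j l. if i < a \<and> j < b \<and> l < c then
      (\<Sum>i'<a. \<Sum>j'<b. \<Sum>l'<c. L1 $$ (i, i') * L2 $$ (j, j') * L3 $$ (l, l') * T i' j' l')
    else 0)"

definition slocc_equiv :: "nat \<Rightarrow> nat \<Rightarrow> nat \<Rightarrow> tensor3 \<Rightarrow> tensor3 \<Rightarrow> bool" where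
  "slocc_equiv a b c T S \<longleftrightarrow>
     (\<exists>L1 L2 L3. L1 \<in> carrier_mat a a \<and> invertible_mat L1 \<and>
                 L2 \<in> carrier_mat b b \<and> invertible_mat L2 \<and>
                 L3 \<in> carrier_mat c c \<and> invertible_mat L3 \<and>
                 S = local_op a b c L1 L2 L3 T)"

text \<open>Reduced density operator on the first party of |T><T|.\<close>
definition reduced_A1 :: "nat \<Rightarrow> nat \<Rightarrow> nat \<Rightarrow> tensor3 \<Rightarrow> complex mat" where
  "reduced_A1 a b c T = mat a a (\<lambda>(i, i'). \<Sum>j<b. \<Sum>l<c. T i j l * cnj (T i' j l))"

definition rank_rho_A1 :: "nat \<Rightarrow> nat \<Rightarrow> nat \<Rightarrow> tensor3 \<Rightarrow> nat" where
  "rank_rho_A1 a b c T = vec_space.rank a (reduced_A1 a b c T)"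

definition inner2 :: "nat \<Rightarrow> nat \<Rightarrow> tensor2 \<Rightarrow> tensor2 \<Rightarrow> complex" where
  "inner2 b c u v = (\<Sum>j<b. \<Sum>l<c. cnj (u j l) * v j l)"

text \<open>X = sum_{i<k} |i> |X i> where (X i)_{i<k} is a basis of the orthogonal complement of
  span {Phi i : i < a} in C^b (x) C^c (Phi = sum_i |i>|Phi i>).\<close>
definition T_rep :: "nat \<Rightarrow> nat \<Rightarrow> nat \<Rightarrow> nat \<Rightarrow> tensor3 \<Rightarrow> tensor3 \<Rightarrow> bool" where
  "T_rep a b c k Phi X \<longleftrightarrow>
     in_tensor3 k b c X \<and>
     (\<forall>i<k. \<forall>i'<a. inner2 b c (Phi i') (X i) = 0) \<and>
     (\<forall>coef. (\<forall>j<b. \<forall>l<c. (\<Sum>i<k. coef i * X i j l) = 0) \<longrightarrow> (\<forall>i<k. coef i = 0)) \<and>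
     (\<forall>w. in_tensor2 b c w \<and> (\<forall>i'<a. inner2 b c (Phi i') w = 0) \<longrightarrow>
          (\<exists>coef. \<forall>j l. w j l = (\<Sum>i<k. coef i * X i j l)))"

definition T_A1 :: "nat \<Rightarrow> nat \<Rightarrow> nat \<Rightarrow> nat \<Rightarrow> tensor3 \<Rightarrow> tensor3 set" where
  "T_A1 a b c k Phi = {Y. \<exists>X. T_rep a b c k Phi X \<and> slocc_equiv k b c X Y}"

end

theory Submission
  imports Defs
begin

(*
  A tensor Phi in C^a (x) C^b (x) C^c is viewed as the family of its slices Phi i in C^b (x) C^c;
  rank(rho^{A1}) = a says that the Gram matrix of the slices is invertible.  A representative X
  of T^{A1}(Phi) lists a basis of the orthogonal complement of the span of the slices.  Three
  transport facts drive the proof: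
    - recombining the slices by an invertible matrix keeps the complement, and a basis of the
      complement may itself be recombined (rep_first_factor, rep_basis_change);
    - applying f2 (x) f3 to the slices moves the complement by the inverse adjoint (rep_local);
    - tensors with a common representative differ by an invertible matrix on the first factor,
      because a span equals its double orthogonal complement (rep_unique).
  "=>": transport a representative along the SLOCC operator.  "<=": take a representative of
  Phi (rep_exists, a dimension count in the flattened space C^(bc)), find it among those of a
  transform of Psi and apply rep_unique.
*)

section \<open>Square matrices as coefficient functions\<close>

text \<open>An n x n matrix is represented by its coefficient function nat => nat => complex,
  of which only the entries below n matter.\<close>

definition delta :: "nat \<Rightarrow> nat \<Rightarrow> complex" where
  "delta i j = (if i = j then 1 else 0)"

definition mmul :: "nat \<Rightarrow> (nat \<Rightarrow> nat \<Rightarrow> complex) \<Rightarrow> (nat \<Rightarrow> nat \<Rightarrow> complex) \<Rightarrow> nat \<Rightarrow> nat \<Rightarrow> complex" where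
  "mmul n f g = (\<lambda>i k. \<Sum>m<n. f i m * g m k)"

definition madj :: "(nat \<Rightarrow> nat \<Rightarrow> complex) \<Rightarrow> nat \<Rightarrow> nat \<Rightarrow> complex" where
  "madj f = (\<lambda>i j. cnj (f j i))"

definition inv_pair :: "nat \<Rightarrow> (nat \<Rightarrow> nat \<Rightarrow> complex) \<Rightarrow> (nat \<Rightarrow> nat \<Rightarrow> complex) \<Rightarrow> bool" where
  "inv_pair n f g \<longleftrightarrow> (\<forall>i<n. \<forall>j<n. mmul n f g i j = delta i j \<and> mmul n g f i j = delta i j)"

lemma sum_delta_left: "j \<in> A \<Longrightarrow> finite A \<Longrightarrow> (\<Sum>i\<in>A. delta j i * f i) = f j"
  by (simp add: delta_def if_distrib[of "\<lambda>x. x * _"] cong: if_cong)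

lemma sum_delta_right: "j \<in> A \<Longrightarrow> finite A \<Longrightarrow> (\<Sum>i\<in>A. f i * delta i j) = f j"
  by (simp add: delta_def if_distrib[of "\<lambda>x. _ * x"] cong: if_cong)

lemma madj_madj [simp]: "madj (madj f) = f"
  unfolding madj_def by simp

lemma mmul_assoc: "mmul n (mmul n f g) h i j = mmul n f (mmul n g h) i j"
proof -
  have "mmul n (mmul n f g) h i j = (\<Sum>m<n. \<Sum>m'<n. f i m' * (g m' m * h m j))"
    unfolding mmul_def by (simp add: sum_distrib_right mult.assoc)
  also have "\<dots> = (\<Sum>m'<n. \<Sum>m<n. f i m' * (g m' m * h m j))" by (rule sum.swap)
  also have "\<dots> = mmul n f (mmul n g h) i j"
    unfolding mmul_def by (simp add: sum_distrib_left)
  finally show ?thesis .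
qed

lemma mmul_cong:
  "(\<And>m. m < n \<Longrightarrow> f i m = f' i m) \<Longrightarrow> (\<And>m. m < n \<Longrightarrow> g m j = g' m j) \<Longrightarrow>
   mmul n f g i j = mmul n f' g' i j"
  unfolding mmul_def by (intro sum.cong) auto

lemma mmul_delta_left: "i < n \<Longrightarrow> mmul n delta f i j = f i j"
  unfolding mmul_def by (simp add: sum_delta_left)

lemma mmul_delta_right: "j < n \<Longrightarrow> mmul n f delta i j = f i j"
  unfolding mmul_def by (simp add: sum_delta_right)

lemma inv_pair_delta: "inv_pair n delta delta"
  unfolding inv_pair_def by (simp add: mmul_delta_left)

lemma inv_pair_sym: "inv_pair n f g \<Longrightarrow> inv_pair n g f"
  unfolding inv_pair_def by auto

lemma inv_pair_madj: assumes "inv_pair n f g" shows "inv_pair n (madj g) (madj f)"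
proof -
  have "mmul n (madj g) (madj f) i j = cnj (mmul n f g j i)"
       "mmul n (madj f) (madj g) i j = cnj (mmul n g f j i)" for i j
    unfolding mmul_def madj_def by (simp_all add: mult.commute)
  then show ?thesis using assms unfolding inv_pair_def by (auto simp: delta_def)
qed

lemma inv_pair_mmul:
  assumes "inv_pair n f g" "inv_pair n f' g'"
  shows "inv_pair n (mmul n f f') (mmul n g' g)"
proof -
  have cancel: "mmul n (mmul n p q) (mmul n q' p') i j = delta i j"
    if "inv_pair n p p'" "inv_pair n q q'" "i < n" "j < n" for p p' q q' i j
  proof -
    have "mmul n (mmul n p q) (mmul n q' p') i j = mmul n p (mmul n q (mmul n q' p')) i j"
      by (rule mmul_assoc)
    also have "\<dots> = mmul n p (mmul n (mmul n q q') p') i j"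
      by (rule mmul_cong) (simp_all add: mmul_assoc)
    also have "\<dots> = mmul n p (mmul n delta p') i j"
      using that by (intro mmul_cong refl) (auto simp: inv_pair_def)
    also have "\<dots> = mmul n p p' i j"
      by (rule mmul_cong) (simp_all add: mmul_delta_left)
    also have "\<dots> = delta i j" using that by (simp add: inv_pair_def)
    finally show ?thesis .
  qed
  show ?thesis
    unfolding inv_pair_def
    using cancel[OF assms] cancel[OF inv_pair_sym[OF assms(2)] inv_pair_sym[OF assms(1)]] by blast
qed

lemma inv_pair_row_zero:
  assumes "inv_pair n M M'" and "\<And>m. m < n \<Longrightarrow> (\<Sum>i<n. co i * M i m) = 0" and "j < n"
  shows "co j = 0"
proof -
  have "co j = (\<Sum>i<n. co i * delta i j)" using \<open>j < n\<close> by (simp add: sum_delta_right)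
  also have "\<dots> = (\<Sum>i<n. co i * mmul n M M' i j)"
    using assms(1,3) unfolding inv_pair_def by (intro sum.cong) auto
  also have "\<dots> = (\<Sum>i<n. \<Sum>m<n. co i * M i m * M' m j)"
    unfolding mmul_def by (simp add: sum_distrib_left mult.assoc)
  also have "\<dots> = (\<Sum>m<n. \<Sum>i<n. co i * M i m * M' m j)" by (rule sum.swap)
  also have "\<dots> = (\<Sum>m<n. (\<Sum>i<n. co i * M i m) * M' m j)" by (simp add: sum_distrib_right)
  also have "\<dots> = 0" using assms(2) by simp
  finally show ?thesis .
qed

lemma inv_pair_row_cancel:
  assumes "inv_pair n M M'" and "m < n"
  shows "(\<Sum>i<n. (\<Sum>m'<n. co m' * M' m' i) * M i m) = co m"
proof -
  have "(\<Sum>i<n. (\<Sum>m'<n. co m' * M' m' i) * M i m) = (\<Sum>i<n. \<Sum>m'<n. co m' * M' m' i * M i m)"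
    by (simp add: sum_distrib_right)
  also have "\<dots> = (\<Sum>m'<n. \<Sum>i<n. co m' * M' m' i * M i m)" by (rule sum.swap)
  also have "\<dots> = (\<Sum>m'<n. co m' * mmul n M' M m' m)"
    unfolding mmul_def by (simp add: sum_distrib_left mult.assoc)
  also have "\<dots> = (\<Sum>m'<n. co m' * delta m' m)"
    using assms unfolding inv_pair_def by (intro sum.cong) auto
  finally show ?thesis using \<open>m < n\<close> by (simp add: sum_delta_right)
qed

definition mat_of_fun :: "nat \<Rightarrow> (nat \<Rightarrow> nat \<Rightarrow> complex) \<Rightarrow> complex mat" where
  "mat_of_fun n f = mat n n (\<lambda>(i, j). f i j)"

lemma mat_of_fun_carrier [simp]: "mat_of_fun n f \<in> carrier_mat n n"
  unfolding mat_of_fun_def by simp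

lemma mat_of_fun_mult:
  "i < n \<Longrightarrow> j < n \<Longrightarrow> (mat_of_fun n f * mat_of_fun n g) $$ (i, j) = mmul n f g i j"
  unfolding mat_of_fun_def mmul_def
  by (simp add: scalar_prod_def atLeast0LessThan)

lemma mat_of_fun_eq_one:
  assumes "\<And>i j. i < n \<Longrightarrow> j < n \<Longrightarrow> mmul n f g i j = delta i j"
  shows "mat_of_fun n f * mat_of_fun n g = 1\<^sub>m n"
proof (rule eq_matI)
  fix i j assume "i < dim_row (1\<^sub>m n :: complex mat)" "j < dim_col (1\<^sub>m n :: complex mat)"
  then show "(mat_of_fun n f * mat_of_fun n g) $$ (i, j) = 1\<^sub>m n $$ (i, j)"
    using mat_of_fun_mult[of i n j f g] assms by (simp add: delta_def)
qed (simp_all add: mat_of_fun_def)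

lemma inv_pair_right_inverse:
  assumes "\<And>i j. i < n \<Longrightarrow> j < n \<Longrightarrow> mmul n f g i j = delta i j"
  shows "inv_pair n f g"
proof -
  have "mat_of_fun n g * mat_of_fun n f = 1\<^sub>m n"
    by (rule mat_mult_left_right_inverse[OF _ _ mat_of_fun_eq_one[OF assms]])
       (simp_all add: mat_of_fun_def)
  then have "mmul n g f i j = delta i j" if "i < n" "j < n" for i j
    using that mat_of_fun_mult[OF that, of g f] by (simp add: delta_def)
  then show ?thesis using assms unfolding inv_pair_def by blast
qed

lemma inv_pair_of_invertible:
  assumes L: "L \<in> carrier_mat n n" "invertible_mat L"
  shows "\<exists>L'. inv_pair n (\<lambda>i j. L $$ (i, j)) L'"
proof -
  obtain L' where L': "inverts_mat L L'" "inverts_mat L' L"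
    using L unfolding invertible_mat_def by blast
  have L'_car: "L' \<in> carrier_mat n n" using L L' unfolding inverts_mat_def
    by (metis carrier_matD carrier_mat_triv index_mult_mat(3) index_one_mat(3))
  have "mmul n (\<lambda>i j. L $$ (i, j)) (\<lambda>i j. L' $$ (i, j)) i j = delta i j"
    if "i < n" "j < n" for i j
  proof -
    have "mmul n (\<lambda>i j. L $$ (i, j)) (\<lambda>i j. L' $$ (i, j)) i j = (L * L') $$ (i, j)"
      using that L L'_car unfolding mmul_def by (simp add: scalar_prod_def atLeast0LessThan)
    then show ?thesis using L' L(1) that unfolding inverts_mat_def by (simp add: delta_def)
  qed
  then show ?thesis using inv_pair_right_inverse by blast
qed

lemma invertible_of_inv_pair:
  assumes "inv_pair n f g"
  shows "invertible_mat (mat_of_fun n f)"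
proof -
  have "mat_of_fun n f * mat_of_fun n g = 1\<^sub>m n" "mat_of_fun n g * mat_of_fun n f = 1\<^sub>m n"
    using assms by (auto intro!: mat_of_fun_eq_one simp: inv_pair_def)
  then show ?thesis
    unfolding invertible_mat_def inverts_mat_def by (auto simp: mat_of_fun_def)
qed

section \<open>Local operators\<close>

definition op2 :: "nat \<Rightarrow> nat \<Rightarrow> (nat \<Rightarrow> nat \<Rightarrow> complex) \<Rightarrow> (nat \<Rightarrow> nat \<Rightarrow> complex) \<Rightarrow> tensor2 \<Rightarrow> tensor2" where
  "op2 b c f2 f3 w = (\<lambda>j l. if j < b \<and> l < c then
     (\<Sum>j'<b. \<Sum>l'<c. f2 j j' * f3 l l' * w j' l') else 0)"

definition lop :: "nat \<Rightarrow> nat \<Rightarrow> nat \<Rightarrow> (nat \<Rightarrow> nat \<Rightarrow> complex) \<Rightarrow> (nat \<Rightarrow> nat \<Rightarrow> complex) \<Rightarrow>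
    (nat \<Rightarrow> nat \<Rightarrow> complex) \<Rightarrow> tensor3 \<Rightarrow> tensor3" where
  "lop a b c f1 f2 f3 T = (\<lambda>i. if i < a then (\<lambda>j l. \<Sum>i'<a. f1 i i' * op2 b c f2 f3 (T i') j l)
     else (\<lambda>j l. 0))"

lemma local_op_eq_lop:
  "local_op a b c L1 L2 L3 T = lop a b c (\<lambda>i j. L1 $$ (i, j)) (\<lambda>i j. L2 $$ (i, j)) (\<lambda>i j. L3 $$ (i, j)) T"
  unfolding local_op_def lop_def op2_def
  by (intro ext) (auto simp: sum_distrib_left mult.assoc)

lemma lop_slice: "i < a \<Longrightarrow> lop a b c f1 f2 f3 T i = (\<lambda>j l. \<Sum>i'<a. f1 i i' * op2 b c f2 f3 (T i') j l)"
  unfolding lop_def by simp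

lemma lop_slice_delta: "i < a \<Longrightarrow> lop a b c delta f2 f3 T i = op2 b c f2 f3 (T i)"
  unfolding lop_def by (simp add: sum_delta_left)

lemma slice_in_tensor2: "in_tensor3 a b c T \<Longrightarrow> in_tensor2 b c (T i)"
  unfolding in_tensor3_def in_tensor2_def by auto

lemma op2_in_tensor2: "in_tensor2 b c (op2 b c f2 f3 w)"
  unfolding op2_def in_tensor2_def by auto

lemma lop_in_tensor3: "in_tensor3 a b c (lop a b c f1 f2 f3 T)"
  unfolding lop_def in_tensor3_def by (auto simp: op2_def)

lemma op2_cong:
  assumes "\<And>i i'. i < b \<Longrightarrow> i' < b \<Longrightarrow> f2 i i' = g2 i i'"
    and "\<And>i i'. i < c \<Longrightarrow> i' < c \<Longrightarrow> f3 i i' = g3 i i'"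
  shows "op2 b c f2 f3 w = op2 b c g2 g3 w"
  unfolding op2_def using assms by (intro ext) (auto intro!: sum.cong)

lemma lop_cong:
  assumes "\<And>i i'. i < a \<Longrightarrow> i' < a \<Longrightarrow> f1 i i' = g1 i i'"
    and "\<And>i i'. i < b \<Longrightarrow> i' < b \<Longrightarrow> f2 i i' = g2 i i'"
    and "\<And>i i'. i < c \<Longrightarrow> i' < c \<Longrightarrow> f3 i i' = g3 i i'"
  shows "lop a b c f1 f2 f3 T = lop a b c g1 g2 g3 T"
proof -
  have "op2 b c f2 f3 = op2 b c g2 g3"
    using op2_cong[of b f2 g2 c f3 g3] assms(2,3) by blast
  then show ?thesis unfolding lop_def using assms(1) by (intro ext) (auto intro!: sum.cong)
qed

lemma op2_id:
  assumes "in_tensor2 b c w" shows "op2 b c delta delta w = w"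
proof (intro ext)
  fix j l
  have "(\<Sum>j'<b. \<Sum>l'<c. delta j j' * delta l l' * w j' l') = (\<Sum>j'<b. delta j j' * (\<Sum>l'<c. delta l l' * w j' l'))"
    by (simp add: sum_distrib_left mult.assoc)
  then show "op2 b c delta delta w j l = w j l"
    using assms unfolding op2_def in_tensor2_def by (simp add: sum_delta_left)
qed

lemma op2_zero: "op2 b c f2 f3 (\<lambda>j l. 0) = (\<lambda>j l. 0)"
  unfolding op2_def by (intro ext) simp

lemma lop_id:
  assumes "in_tensor3 a b c T" shows "lop a b c delta delta delta T = T"
proof (rule ext)
  fix i
  show "lop a b c delta delta delta T i = T i"
  proof (cases "i < a")
    case True
    then show ?thesis by (simp add: lop_slice_delta op2_id slice_in_tensor2[OF assms])
  next
    case False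
    then have "T i = (\<lambda>j l. 0)" using assms unfolding in_tensor3_def by (intro ext) auto
    then show ?thesis using False unfolding lop_def by simp
  qed
qed

lemma sum_swap_outer:
  "(\<Sum>j\<in>B. \<Sum>l\<in>C. \<Sum>i\<in>I. F i j l) = (\<Sum>i\<in>I. \<Sum>j\<in>B. \<Sum>l\<in>C. F i j l)"
proof -
  have "(\<Sum>j\<in>B. \<Sum>l\<in>C. \<Sum>i\<in>I. F i j l) = (\<Sum>j\<in>B. \<Sum>i\<in>I. \<Sum>l\<in>C. F i j l)"
    by (rule sum.cong[OF refl], rule sum.swap)
  also have "\<dots> = (\<Sum>i\<in>I. \<Sum>j\<in>B. \<Sum>l\<in>C. F i j l)" by (rule sum.swap)
  finally show ?thesis .
qed

lemma op2_lin:
  "op2 b c f2 f3 (\<lambda>j l. \<Sum>i\<in>I. co i * w i j l) = (\<lambda>j l. \<Sum>i\<in>I. co i * op2 b c f2 f3 (w i) j l)"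
proof (intro ext)
  fix j l
  have "(\<Sum>j'<b. \<Sum>l'<c. f2 j j' * f3 l l' * (\<Sum>i\<in>I. co i * w i j' l'))
      = (\<Sum>j'<b. \<Sum>l'<c. \<Sum>i\<in>I. co i * (f2 j j' * f3 l l' * w i j' l'))"
    by (simp add: sum_distrib_left algebra_simps)
  also have "\<dots> = (\<Sum>i\<in>I. \<Sum>j'<b. \<Sum>l'<c. co i * (f2 j j' * f3 l l' * w i j' l'))"
    by (rule sum_swap_outer)
  also have "\<dots> = (\<Sum>i\<in>I. co i * (\<Sum>j'<b. \<Sum>l'<c. f2 j j' * f3 l l' * w i j' l'))"
    by (simp add: sum_distrib_left)
  finally show "op2 b c f2 f3 (\<lambda>j l. \<Sum>i\<in>I. co i * w i j l) j l = (\<Sum>i\<in>I. co i * op2 b c f2 f3 (w i) j l)"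
    unfolding op2_def by (cases "j < b \<and> l < c") auto
qed

lemma sum_swap_pairs:
  "(\<Sum>j\<in>B. \<Sum>l\<in>C. \<Sum>j'\<in>B'. \<Sum>l'\<in>C'. F j l j' l') = (\<Sum>j'\<in>B'. \<Sum>l'\<in>C'. \<Sum>j\<in>B. \<Sum>l\<in>C. F j l j' l')"
proof -
  have "(\<Sum>j\<in>B. \<Sum>l\<in>C. \<Sum>j'\<in>B'. \<Sum>l'\<in>C'. F j l j' l') = (\<Sum>j\<in>B. \<Sum>j'\<in>B'. \<Sum>l\<in>C. \<Sum>l'\<in>C'. F j l j' l')"
    by (rule sum.cong[OF refl], rule sum.swap)
  also have "\<dots> = (\<Sum>j'\<in>B'. \<Sum>j\<in>B. \<Sum>l\<in>C. \<Sum>l'\<in>C'. F j l j' l')"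
    by (rule sum.swap)
  also have "\<dots> = (\<Sum>j'\<in>B'. \<Sum>j\<in>B. \<Sum>l'\<in>C'. \<Sum>l\<in>C. F j l j' l')"
    by (rule sum.cong[OF refl], rule sum.cong[OF refl], rule sum.swap)
  also have "\<dots> = (\<Sum>j'\<in>B'. \<Sum>l'\<in>C'. \<Sum>j\<in>B. \<Sum>l\<in>C. F j l j' l')"
    by (rule sum.cong[OF refl], rule sum.swap)
  finally show ?thesis .
qed

lemma op2_comp: "op2 b c g2 g3 (op2 b c f2 f3 w) = op2 b c (mmul b g2 f2) (mmul c g3 f3) w"
proof (intro ext)
  fix j l
  have "(\<Sum>j'<b. \<Sum>l'<c. g2 j j' * g3 l l' * op2 b c f2 f3 w j' l')
      = (\<Sum>j'<b. \<Sum>l'<c. \<Sum>j''<b. \<Sum>l''<c. (g2 j j' * f2 j' j'') * (g3 l l' * f3 l' l'') * w j'' l'')"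
    unfolding op2_def by (intro sum.cong refl) (simp add: sum_distrib_left algebra_simps)
  also have "\<dots> = (\<Sum>j''<b. \<Sum>l''<c. \<Sum>j'<b. \<Sum>l'<c. (g2 j j' * f2 j' j'') * (g3 l l' * f3 l' l'') * w j'' l'')"
    by (rule sum_swap_pairs)
  also have "\<dots> = (\<Sum>j''<b. \<Sum>l''<c. mmul b g2 f2 j j'' * mmul c g3 f3 l l'' * w j'' l'')"
    by (simp only: mmul_def sum_product) (simp only: sum_distrib_right)
  finally show "op2 b c g2 g3 (op2 b c f2 f3 w) j l = op2 b c (mmul b g2 f2) (mmul c g3 f3) w j l"
    unfolding op2_def[of b c g2 g3] op2_def[of b c "mmul b g2 f2"] by simp
qed

lemma op2_inverse:
  assumes "inv_pair b f2 g2" "inv_pair c f3 g3" "in_tensor2 b c w"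
  shows "op2 b c g2 g3 (op2 b c f2 f3 w) = w"
proof -
  have "op2 b c g2 g3 (op2 b c f2 f3 w) = op2 b c delta delta w"
    unfolding op2_comp by (rule op2_cong) (use assms in \<open>auto simp: inv_pair_def\<close>)
  then show ?thesis using op2_id[OF assms(3)] by simp
qed

lemma op2_kernel:
  assumes "inv_pair b f2 g2" "inv_pair c f3 g3" "in_tensor2 b c w"
    and zero: "\<forall>j<b. \<forall>l<c. op2 b c f2 f3 w j l = 0"
  shows "\<forall>j<b. \<forall>l<c. w j l = 0"
proof -
  have "op2 b c f2 f3 w j l = 0" for j l
    using zero by (cases "j < b \<and> l < c") (simp_all add: op2_def)
  then have "op2 b c f2 f3 w = (\<lambda>j l. 0)" by (intro ext)
  then have "w = op2 b c g2 g3 (\<lambda>j l. 0)" using op2_inverse[OF assms(1-3)] by simp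
  then show ?thesis by (simp add: op2_zero)
qed

lemma sum_mmul:
  "(\<Sum>i'<n. g i i' * (\<Sum>i''<n. f i' i'' * y i'')) = (\<Sum>i''<n. mmul n g f i i'' * y i'')"
proof -
  have "(\<Sum>i'<n. g i i' * (\<Sum>i''<n. f i' i'' * y i'')) = (\<Sum>i'<n. \<Sum>i''<n. g i i' * f i' i'' * y i'')"
    by (simp add: sum_distrib_left mult.assoc)
  also have "\<dots> = (\<Sum>i''<n. \<Sum>i'<n. g i i' * f i' i'' * y i'')" by (rule sum.swap)
  finally show ?thesis unfolding mmul_def by (simp add: sum_distrib_right)
qed

lemma lop_comp:
  "lop a b c g1 g2 g3 (lop a b c f1 f2 f3 T) = lop a b c (mmul a g1 f1) (mmul b g2 f2) (mmul c g3 f3) T"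
proof (intro ext)
  fix i j l
  have "op2 b c g2 g3 (lop a b c f1 f2 f3 T i') = (\<lambda>j l. \<Sum>i''<a. f1 i' i'' * op2 b c (mmul b g2 f2) (mmul c g3 f3) (T i'') j l)"
    if "i' < a" for i'
    using that by (simp add: lop_slice op2_lin op2_comp)
  then show "lop a b c g1 g2 g3 (lop a b c f1 f2 f3 T) i j l = lop a b c (mmul a g1 f1) (mmul b g2 f2) (mmul c g3 f3) T i j l"
    unfolding lop_def[of a b c g1] lop_def[of a b c "mmul a g1 f1"]
    using sum_mmul[where n = a and g = g1 and f = f1 and y = "\<lambda>i''. op2 b c (mmul b g2 f2) (mmul c g3 f3) (T i'') j l"]
    by simp
qed

lemma inner2_cnj: "inner2 b c u v = cnj (inner2 b c v u)"
  unfolding inner2_def by (simp add: mult.commute)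

lemma inner2_lin_right:
  "inner2 b c u (\<lambda>j l. \<Sum>i\<in>I. co i * v i j l) = (\<Sum>i\<in>I. co i * inner2 b c u (v i))"
proof -
  have "inner2 b c u (\<lambda>j l. \<Sum>i\<in>I. co i * v i j l) = (\<Sum>j<b. \<Sum>l<c. \<Sum>i\<in>I. co i * (cnj (u j l) * v i j l))"
    unfolding inner2_def by (simp add: sum_distrib_left mult.left_commute)
  also have "\<dots> = (\<Sum>i\<in>I. \<Sum>j<b. \<Sum>l<c. co i * (cnj (u j l) * v i j l))"
    by (rule sum_swap_outer)
  finally show ?thesis unfolding inner2_def by (simp add: sum_distrib_left)
qed

lemma inner2_lin_left:
  "inner2 b c (\<lambda>j l. \<Sum>i\<in>I. co i * v i j l) u = (\<Sum>i\<in>I. cnj (co i) * inner2 b c (v i) u)"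
  by (subst inner2_cnj, simp add: inner2_lin_right, subst inner2_cnj, simp)

lemma inner2_adj: "inner2 b c (op2 b c f2 f3 u) v = inner2 b c u (op2 b c (madj f2) (madj f3) v)"
proof -
  have "inner2 b c (op2 b c f2 f3 u) v
      = (\<Sum>j<b. \<Sum>l<c. \<Sum>j'<b. \<Sum>l'<c. cnj (u j' l') * (cnj (f2 j j') * cnj (f3 l l') * v j l))"
    unfolding inner2_def op2_def by (simp add: sum_distrib_left sum_distrib_right algebra_simps)
  also have "\<dots> = (\<Sum>j'<b. \<Sum>l'<c. \<Sum>j<b. \<Sum>l<c. cnj (u j' l') * (cnj (f2 j j') * cnj (f3 l l') * v j l))"
    by (rule sum_swap_pairs)
  also have "\<dots> = inner2 b c u (op2 b c (madj f2) (madj f3) v)"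
    unfolding inner2_def op2_def madj_def by (simp add: sum_distrib_left)
  finally show ?thesis .
qed

section \<open>Gram matrices over a finite index set\<close>

text \<open>The standard inner product of C^P for a finite index set P.  Working with an arbitrary P
  lets the same facts serve both C^b (x) C^c (P a product of intervals) and its flattening C^(bc).\<close>

definition sprod :: "'p set \<Rightarrow> ('p \<Rightarrow> complex) \<Rightarrow> ('p \<Rightarrow> complex) \<Rightarrow> complex" where
  "sprod P u v = (\<Sum>p\<in>P. cnj (u p) * v p)"

lemma sprod_cnj: "sprod P u v = cnj (sprod P v u)"
  unfolding sprod_def by (simp add: mult.commute)

lemma sprod_lin_right: "sprod P u (\<lambda>p. \<Sum>i\<in>I. co i * v i p) = (\<Sum>i\<in>I. co i * sprod P u (v i))"
proof -
  have "sprod P u (\<lambda>p. \<Sum>i\<in>I. co i * v i p) = (\<Sum>p\<in>P. \<Sum>i\<in>I. co i * (cnj (u p) * v i p))"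
    unfolding sprod_def by (simp add: sum_distrib_left mult.left_commute)
  also have "\<dots> = (\<Sum>i\<in>I. \<Sum>p\<in>P. co i * (cnj (u p) * v i p))" by (rule sum.swap)
  finally show ?thesis unfolding sprod_def by (simp add: sum_distrib_left)
qed

lemma sprod_diff_right: "sprod P u (\<lambda>p. v p - w p) = sprod P u v - sprod P u w"
  unfolding sprod_def by (simp add: sum_subtractf right_diff_distrib)

lemma sprod_self_eq_0:
  assumes "finite P" "sprod P x x = 0" "p \<in> P"
  shows "x p = 0"
proof -
  have "cnj z * z = complex_of_real ((cmod z)\<^sup>2)" for z
    using complex_norm_square[of z] by (simp add: mult.commute)
  then have "complex_of_real (\<Sum>p\<in>P. (cmod (x p))\<^sup>2) = 0"
    using assms(2) unfolding sprod_def by simp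
  then have "(\<Sum>p\<in>P. (cmod (x p))\<^sup>2) = 0" by (simp only: of_real_eq_0_iff)
  then have "(cmod (x p))\<^sup>2 = 0"
    using assms(1,3) sum_nonneg_eq_0_iff[of P "\<lambda>p. (cmod (x p))\<^sup>2"] by (simp del: norm_eq_zero)
  then show ?thesis by simp
qed

lemma gram_indep:
  assumes G: "inv_pair d (\<lambda>i m. sprod P (phi m) (phi i)) G"
    and zero: "\<And>p. p \<in> P \<Longrightarrow> (\<Sum>i<d. co i * phi i p) = 0"
    and "i < d"
  shows "co i = 0"
proof -
  let ?gram = "\<lambda>i m. sprod P (phi m) (phi i)"
  have row_zero: "(\<Sum>i<d. co i * ?gram i m) = 0" for m
  proof -
    have "(\<Sum>i<d. co i * ?gram i m) = sprod P (phi m) (\<lambda>p. \<Sum>i<d. co i * phi i p)"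
      by (rule sprod_lin_right[symmetric])
    also have "\<dots> = 0" unfolding sprod_def using zero by simp
    finally show ?thesis .
  qed
  show ?thesis by (rule inv_pair_row_zero[OF G row_zero \<open>i < d\<close>])
qed

lemma gram_projection:
  assumes G: "inv_pair d (\<lambda>i m. sprod P (phi m) (phi i)) G"
  shows "\<exists>co. \<forall>i<d. sprod P (phi i) (\<lambda>p. w p - (\<Sum>i'<d. co i' * phi i' p)) = 0"
proof (intro exI allI impI)
  let ?gram = "\<lambda>i m. sprod P (phi m) (phi i)"
  fix i assume "i < d"
  define co where "co i' = (\<Sum>m<d. sprod P (phi m) w * G m i')" for i'
  have "sprod P (phi i) (\<lambda>p. \<Sum>i'<d. co i' * phi i' p) = (\<Sum>i'<d. co i' * ?gram i' i)"
    by (rule sprod_lin_right)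
  also have "\<dots> = (\<Sum>i'<d. \<Sum>m<d. sprod P (phi m) w * (G m i' * ?gram i' i))"
    unfolding co_def by (simp add: sum_distrib_right mult.assoc)
  also have "\<dots> = (\<Sum>m<d. \<Sum>i'<d. sprod P (phi m) w * (G m i' * ?gram i' i))" by (rule sum.swap)
  also have "\<dots> = (\<Sum>m<d. sprod P (phi m) w * mmul d G ?gram m i)"
    unfolding mmul_def by (simp add: sum_distrib_left)
  also have "\<dots> = (\<Sum>m<d. sprod P (phi m) w * delta m i)"
    using G \<open>i < d\<close> unfolding inv_pair_def by (intro sum.cong) auto
  also have "\<dots> = sprod P (phi i) w" using \<open>i < d\<close> by (simp add: sum_delta_right)
  finally show "sprod P (phi i) (\<lambda>p. w p - (\<Sum>i'<d. co i' * phi i' p)) = 0"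
    by (simp add: sprod_diff_right)
qed

lemma gram_perp_perp:
  assumes "finite P" and G: "inv_pair d (\<lambda>i m. sprod P (phi m) (phi i)) G"
    and perp: "\<And>x. (\<forall>i<d. sprod P (phi i) x = 0) \<Longrightarrow> sprod P x w = 0"
  shows "\<exists>co. \<forall>p\<in>P. w p = (\<Sum>i<d. co i * phi i p)"
proof -
  obtain co where co: "\<And>i. i < d \<Longrightarrow> sprod P (phi i) (\<lambda>p. w p - (\<Sum>i'<d. co i' * phi i' p)) = 0"
    using gram_projection[OF G] by blast
  define s where "s p = (\<Sum>i<d. co i * phi i p)" for p
  define r where "r p = w p - s p" for p
  have r_perp: "\<forall>i<d. sprod P (phi i) r = 0" using co unfolding r_def s_def by blast
  have "sprod P r s = (\<Sum>i<d. co i * sprod P r (phi i))"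
    unfolding s_def by (rule sprod_lin_right)
  also have "\<dots> = 0" using r_perp by (simp add: sprod_cnj[of P r])
  finally have "sprod P r r = 0"
    using perp[OF r_perp] unfolding r_def[of] sprod_diff_right by (simp add: r_def[symmetric])
  then have "r p = 0" if "p \<in> P" for p using sprod_self_eq_0[OF \<open>finite P\<close> _ that] by blast
  then show ?thesis unfolding r_def s_def by auto
qed

section \<open>The orthogonal complement of an independent family in C^N\<close>

definition perp_set :: "nat \<Rightarrow> nat \<Rightarrow> (nat \<Rightarrow> nat \<Rightarrow> complex) \<Rightarrow> complex vec set" where
  "perp_set N d phi = {v \<in> carrier_vec N. \<forall>i<d. sprod {..<N} (phi i) (($) v) = 0}"

definition family_set :: "nat \<Rightarrow> nat \<Rightarrow> (nat \<Rightarrow> nat \<Rightarrow> complex) \<Rightarrow> complex vec set" where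
  "family_set N d phi = (\<lambda>i. vec N (phi i)) ` {..<d}"

context
  fixes N :: nat
begin

interpretation VS: vec_space "TYPE(complex)" N .

text \<open>Every set of vectors is spanned by a finite independent subset (take one of maximal size).\<close>
lemma maximal_indpt_subset:
  assumes C: "C \<subseteq> carrier_vec N"
  shows "\<exists>B \<subseteq> C. finite B \<and> VS.lin_indpt B \<and> C \<subseteq> VS.span B"
proof -
  define P where "P B \<longleftrightarrow> B \<subseteq> C \<and> VS.lin_indpt B" for B
  have P_bound: "card B < N + 1" if "P B" for B
  proof -
    have "B \<subseteq> carrier_vec N" "VS.lin_indpt B" using that C unfolding P_def by auto
    then have "card B \<le> N" using VS.li_le_dim(2)[OF VS.fin_dim] unfolding VS.dim_is_n by auto
    then show ?thesis by simp
  qed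
  have "VS.lin_indpt {}" unfolding VS.lin_dep_def by auto
  then obtain B where PB: "P B" and maxB: "\<And>B'. P B' \<Longrightarrow> card B' \<le> card B"
    using ex_has_greatest_nat[of P "{}" card "N + 1"] P_bound unfolding P_def by auto
  have BC: "B \<subseteq> C" and indB: "VS.lin_indpt B" using PB unfolding P_def by auto
  have Bcar: "B \<subseteq> carrier_vec N" using BC C by auto
  have finB: "finite B" using VS.li_le_dim(1)[OF VS.fin_dim Bcar indB] .
  have "v \<in> VS.span B" if v: "v \<in> C" for v
  proof (rule ccontr)
    assume nv: "v \<notin> VS.span B"
    have vB: "v \<notin> B" using nv VS.in_own_span[OF Bcar] by auto
    have "VS.lin_indpt (B \<union> {v})"
      using VS.lin_dep_iff_in_span[OF Bcar indB _ vB] nv v C by auto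
    then have "card (B \<union> {v}) \<le> card B" using maxB BC v unfolding P_def by auto
    then show False using vB finB by simp
  qed
  then show ?thesis using BC finB indB by blast
qed

lemma sprod_lincomb:
  assumes "A \<subseteq> carrier_vec N"
  shows "sprod {..<N} u (($) (VS.lincomb a A)) = (\<Sum>x\<in>A. a x * sprod {..<N} u (($) x))"
proof -
  have "sprod {..<N} u (($) (VS.lincomb a A)) = sprod {..<N} u (\<lambda>p. \<Sum>x\<in>A. a x * x $ p)"
    unfolding sprod_def using VS.lincomb_index[OF _ assms] by (intro sum.cong) auto
  then show ?thesis by (simp add: sprod_lin_right)
qed

lemma sprod_vec_right: "sprod {..<N} u (($) (vec N f)) = sprod {..<N} u f"
  and sprod_vec_left: "sprod {..<N} (($) (vec N f)) u = sprod {..<N} f u"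
  unfolding sprod_def by (intro sum.cong; simp)+

lemma span_perp_set:
  assumes "B \<subseteq> perp_set N d phi"
  shows "VS.span B \<subseteq> perp_set N d phi"
proof
  fix y assume "y \<in> VS.span B"
  then obtain a A where y: "y = VS.lincomb a A" "finite A" "A \<subseteq> B" unfolding VS.span_def by auto
  have Acar: "A \<subseteq> carrier_vec N" using y(3) assms unfolding perp_set_def by auto
  have "sprod {..<N} (phi i) (($) y) = 0" if "i < d" for i
    unfolding y(1) sprod_lincomb[OF Acar] using y(3) assms that unfolding perp_set_def
    by (intro sum.neutral) auto
  then show "y \<in> perp_set N d phi"
    unfolding perp_set_def using y(1) VS.lincomb_closed[OF Acar] by auto
qed

lemma family_vectors:
  assumes G: "inv_pair d (\<lambda>i m. sprod {..<N} (phi m) (phi i)) G"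
  defines "S \<equiv> family_set N d phi"
  shows "inj_on (\<lambda>i. vec N (phi i)) {..<d}" and "VS.lin_indpt S" and "card S = d"
    and "\<And>a p. p < N \<Longrightarrow> VS.lincomb a S $ p = (\<Sum>i<d. a (vec N (phi i)) * phi i p)"
proof -
  have Scar: "S \<subseteq> carrier_vec N" unfolding S_def family_set_def by auto
  show inj: "inj_on (\<lambda>i. vec N (phi i)) {..<d}"
  proof (rule inj_onI)
    fix i i' assume i: "i \<in> {..<d}" "i' \<in> {..<d}" and eq: "vec N (phi i) = vec N (phi i')"
    have "(\<Sum>m<d. (delta i m - delta i' m) * phi m p) = 0" if "p \<in> {..<N}" for p
    proof -
      have "phi i p = phi i' p" using eq that by (metis index_vec lessThan_iff)
      then show ?thesis using i by (simp add: left_diff_distrib sum_subtractf sum_delta_left)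
    qed
    from gram_indep[OF G this] i(1) have "delta i i - delta i' i = 0" by blast
    then show "i = i'" by (simp add: delta_def split: if_splits)
  qed
  show lc: "VS.lincomb a S $ p = (\<Sum>i<d. a (vec N (phi i)) * phi i p)" if "p < N" for a p
  proof -
    have "VS.lincomb a S $ p = (\<Sum>x\<in>S. a x * x $ p)" by (rule VS.lincomb_index[OF that Scar])
    also have "\<dots> = (\<Sum>i<d. a (vec N (phi i)) * vec N (phi i) $ p)"
      unfolding S_def family_set_def by (rule sum.reindex[OF inj, unfolded comp_def])
    finally show ?thesis using that by simp
  qed
  show "VS.lin_indpt S"
  proof (rule VS.finite_lin_indpt2)
    fix a assume "VS.lincomb a S = 0\<^sub>v N"
    then have "(\<Sum>i<d. a (vec N (phi i)) * phi i p) = 0" if "p \<in> {..<N}" for p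
      using lc[of p a] that by simp
    then have "a (vec N (phi i)) = 0" if "i < d" for i
      using gram_indep[OF G, of "\<lambda>i. a (vec N (phi i))"] that by blast
    then show "\<forall>v\<in>S. a v = 0" unfolding S_def family_set_def by auto
  qed (use Scar in \<open>auto simp: S_def family_set_def\<close>)
  show "card S = d" unfolding S_def family_set_def using card_image[OF inj] by simp
qed

lemma vec_self_orth_zero:
  "x \<in> carrier_vec N \<Longrightarrow> sprod {..<N} (($) x) (($) x) = 0 \<Longrightarrow> x = 0\<^sub>v N"
  using sprod_self_eq_0[of "{..<N}" "($) x"] by (intro eq_vecI) auto

text \<open>An independent subset of the orthogonal complement avoids the family: a member of both would
  be orthogonal to itself, hence zero.\<close>
lemma perp_family_disjoint:
  assumes B: "B \<subseteq> perp_set N d phi" "VS.lin_indpt B"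
  shows "B \<inter> family_set N d phi = {}"
proof (rule ccontr)
  have Bcar: "B \<subseteq> carrier_vec N" using B(1) unfolding perp_set_def by auto
  assume "B \<inter> family_set N d phi \<noteq> {}"
  then obtain i where i: "i < d" "vec N (phi i) \<in> B" unfolding family_set_def by auto
  then have "sprod {..<N} (phi i) (phi i) = 0"
    using B(1) sprod_vec_right unfolding perp_set_def by fastforce
  then have "sprod {..<N} (($) (vec N (phi i))) (($) (vec N (phi i))) = 0"
    by (simp add: sprod_vec_left sprod_vec_right)
  then have "vec N (phi i) = 0\<^sub>v N" by (intro vec_self_orth_zero) auto
  then show False using VS.vs_zero_lin_dep[OF Bcar B(2)] i by simp
qed

text \<open>Such a subset together with the family is independent: in a vanishing combination the two
  parts are orthogonal and opposite, hence both zero.\<close>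
lemma perp_union_indep:
  assumes G: "inv_pair d (\<lambda>i m. sprod {..<N} (phi m) (phi i)) G"
    and B: "B \<subseteq> perp_set N d phi" "finite B" "VS.lin_indpt B"
  shows "VS.lin_indpt (B \<union> family_set N d phi)"
proof -
  let ?S = "family_set N d phi"
  have Bcar: "B \<subseteq> carrier_vec N" using B(1) unfolding perp_set_def by auto
  have Scar: "?S \<subseteq> carrier_vec N" and finS: "finite ?S" unfolding family_set_def by auto
  note disj = perp_family_disjoint[OF B(1,3)]
  show ?thesis
  proof (rule VS.finite_lin_indpt2)
    fix a assume a0: "VS.lincomb a (B \<union> ?S) = 0\<^sub>v N"
    define x where "x = VS.lincomb a B"
    define y where "y = VS.lincomb a ?S"
    have xcar: "x \<in> carrier_vec N" unfolding x_def using VS.lincomb_closed[OF Bcar] by auto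
    have ycar: "y \<in> carrier_vec N" unfolding y_def using VS.lincomb_closed[OF Scar] by auto
    have "x + y = 0\<^sub>v N"
      using a0 VS.lincomb_union[OF Bcar Scar disj B(2) finS] unfolding x_def y_def by auto
    then have y_neg: "y $ p = - (x $ p)" if "p < N" for p
    proof -
      have "x $ p + y $ p = (x + y) $ p" using that ycar by simp
      also have "\<dots> = 0" using \<open>x + y = 0\<^sub>v N\<close> that by simp
      finally show ?thesis by (simp add: eq_neg_iff_add_eq_0 add.commute)
    qed
    have "x \<in> perp_set N d phi"
      using span_perp_set[OF B(1)] B(2) unfolding x_def VS.span_def by blast
    then have orth: "sprod {..<N} (($) x) (($) (vec N (phi i))) = 0" if "i < d" for i
      using that sprod_cnj[of "{..<N}" "($) x"] unfolding perp_set_def sprod_vec_right by auto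
    have "sprod {..<N} (($) x) (($) y) = 0"
      unfolding y_def sprod_lincomb[OF Scar] by (intro sum.neutral) (auto simp: family_set_def orth)
    moreover have "sprod {..<N} (($) x) (($) y) = - sprod {..<N} (($) x) (($) x)"
      unfolding sprod_def sum_negf[symmetric] by (rule sum.cong) (auto simp: y_neg)
    ultimately have "sprod {..<N} (($) x) (($) x) = 0" by simp
    then have x0: "x = 0\<^sub>v N" using vec_self_orth_zero xcar by blast
    then have y0: "y = 0\<^sub>v N" using \<open>x + y = 0\<^sub>v N\<close> ycar by simp
    have "a \<in> B \<rightarrow> {0}" using VS.not_lindepD[OF B(3) B(2) subset_refl] x0 unfolding x_def by auto
    moreover have "a \<in> ?S \<rightarrow> {0}"
      using VS.not_lindepD[OF family_vectors(2)[OF G] finS subset_refl] y0 unfolding y_def by auto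
    ultimately show "\<forall>v\<in>B \<union> ?S. a v = 0" by auto
  qed (use B(2) finS Bcar Scar in auto)
qed

text \<open>If B spans the orthogonal complement, then B together with the family spans C^N: subtract
  from any vector its orthogonal projection onto the span of the family.\<close>
lemma perp_union_spans:
  assumes G: "inv_pair d (\<lambda>i m. sprod {..<N} (phi m) (phi i)) G"
    and B: "finite B" "B \<subseteq> carrier_vec N" "perp_set N d phi \<subseteq> VS.span B"
    and disj: "B \<inter> family_set N d phi = {}"
  shows "carrier_vec N \<subseteq> VS.span (B \<union> family_set N d phi)"
proof
  let ?S = "family_set N d phi"
  have Scar: "?S \<subseteq> carrier_vec N" and finS: "finite ?S" unfolding family_set_def by auto
  fix w :: "complex vec" assume w: "w \<in> carrier_vec N"
  obtain co where co: "\<And>i. i < d \<Longrightarrow> sprod {..<N} (phi i) (\<lambda>p. w $ p - (\<Sum>i'<d. co i' * phi i' p)) = 0"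
    using gram_projection[OF G] by blast
  define a where "a v = co (the_inv_into {..<d} (\<lambda>i. vec N (phi i)) v)" for v
  have a_vec: "a (vec N (phi i)) = co i" if "i < d" for i
    unfolding a_def using the_inv_into_f_f[OF family_vectors(1)[OF G]] that by simp
  define s where "s = VS.lincomb a ?S"
  have scar: "s \<in> carrier_vec N" unfolding s_def using VS.lincomb_closed[OF Scar] by auto
  have s_ent: "s $ p = (\<Sum>i<d. co i * phi i p)" if "p < N" for p
    unfolding s_def family_vectors(4)[OF G that] using a_vec by simp
  have "sprod {..<N} (phi i) (($) (w - s)) = 0" if "i < d" for i
  proof -
    have "sprod {..<N} (phi i) (($) (w - s)) = sprod {..<N} (phi i) (\<lambda>p. w $ p - (\<Sum>i'<d. co i' * phi i' p))"
      unfolding sprod_def using w scar s_ent by (intro sum.cong) auto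
    then show ?thesis using co[OF that] by simp
  qed
  then have "w - s \<in> perp_set N d phi" unfolding perp_set_def using w scar by auto
  then obtain b where b: "w - s = VS.lincomb b B" using B VS.finite_span by auto
  have "w = (w - s) + s" using w scar by auto
  also have "\<dots> = VS.lincomb b B + VS.lincomb a ?S" by (simp only: b) (simp only: s_def)
  also have "\<dots> = VS.lincomb (\<lambda>v. if v \<in> B then b v else a v) (B \<union> ?S)"
    by (rule VS.lincomb_union2) (use B finS Scar disj in auto)
  finally show "w \<in> VS.span (B \<union> ?S)" unfolding VS.span_def using B(1) finS by blast
qed

lemma perp_basis_card:
  assumes G: "inv_pair d (\<lambda>i m. sprod {..<N} (phi m) (phi i)) G"
    and B: "B \<subseteq> perp_set N d phi" "finite B" "VS.lin_indpt B" "perp_set N d phi \<subseteq> VS.span B"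
  shows "card B = N - d"
proof -
  let ?S = "family_set N d phi"
  have Bcar: "B \<subseteq> carrier_vec N" using B(1) unfolding perp_set_def by auto
  have Scar: "?S \<subseteq> carrier_vec N" and finS: "finite ?S" unfolding family_set_def by auto
  note disj = perp_family_disjoint[OF B(1,3)]
  have "VS.span (B \<union> ?S) = carrier_vec N"
    using perp_union_spans[OF G B(2) Bcar B(4) disj] VS.span_is_subset2[of "B \<union> ?S"] Bcar Scar
    by auto
  then have "VS.basis (B \<union> ?S)"
    unfolding VS.basis_def using perp_union_indep[OF G B(1-3)] Bcar Scar by auto
  then have "N = card (B \<union> ?S)" using VS.dim_basis B(2) finS VS.dim_is_n by simp
  also have "\<dots> = card B + d"
    using card_Un_disjoint[OF B(2) finS disj] family_vectors(3)[OF G] by simp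
  finally show ?thesis by simp
qed

lemma perp_basis_flat:
  fixes phi :: "nat \<Rightarrow> nat \<Rightarrow> complex"
  assumes G: "inv_pair d (\<lambda>i m. sprod {..<N} (phi m) (phi i)) G"
  shows "\<exists>x. (\<forall>i<N-d. \<forall>i'<d. sprod {..<N} (phi i') (x i) = 0)
    \<and> (\<forall>co. (\<forall>p<N. (\<Sum>i<N-d. co i * x i p) = 0) \<longrightarrow> (\<forall>i<N-d. co i = 0))
    \<and> (\<forall>w. (\<forall>i'<d. sprod {..<N} (phi i') w = 0) \<longrightarrow> (\<exists>co. \<forall>p<N. w p = (\<Sum>i<N-d. co i * x i p)))"
proof -
  have "perp_set N d phi \<subseteq> carrier_vec N" unfolding perp_set_def by auto
  from maximal_indpt_subset[OF this]
  obtain B where B: "B \<subseteq> perp_set N d phi" "finite B" "VS.lin_indpt B" "perp_set N d phi \<subseteq> VS.span B"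
    by blast
  have Bcar: "B \<subseteq> carrier_vec N" using B(1) unfolding perp_set_def by auto
  obtain xs where xs: "set xs = B" "distinct xs" using finite_distinct_list[OF B(2)] by auto
  have len: "length xs = N - d" using distinct_card[OF xs(2)] xs(1) perp_basis_card[OF G B] by simp
  have inj: "inj_on (nth xs) {..<N-d}" using inj_on_nth[OF xs(2)] len by auto
  have B_img: "B = nth xs ` {..<N-d}"
    using nth_image[of "length xs" xs] xs(1) len by (simp add: atLeast0LessThan)
  have sum_B: "(\<Sum>v\<in>B. f v) = (\<Sum>i<N-d. f (xs ! i))" for f :: "complex vec \<Rightarrow> complex"
    unfolding B_img by (simp add: sum.reindex[OF inj])
  have xs_B: "xs ! i \<in> B" if "i < N - d" for i using that B_img by auto
  have lincomb_ent: "VS.lincomb a B $ p = (\<Sum>i<N-d. a (xs ! i) * xs ! i $ p)" if "p < N" for a p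
    using VS.lincomb_index[OF that Bcar] sum_B by simp
  show ?thesis
  proof (intro exI[of _ "\<lambda>i p. xs ! i $ p"] conjI allI impI)
    fix i i' assume "i < N - d" "i' < d"
    have "xs ! i \<in> perp_set N d phi" using xs_B[OF \<open>i < N - d\<close>] B(1) by blast
    then show "sprod {..<N} (phi i') (($) (xs ! i)) = 0" using \<open>i' < d\<close> unfolding perp_set_def by blast
  next
    fix co :: "nat \<Rightarrow> complex" and i
    assume zero: "\<forall>p<N. (\<Sum>i<N-d. co i * xs ! i $ p) = 0" and i: "i < N - d"
    define a where "a v = co (the_inv_into {..<N-d} (nth xs) v)" for v
    have a_xs: "a (xs ! j) = co j" if "j < N - d" for j
      unfolding a_def using the_inv_into_f_f[OF inj] that by simp
    have "VS.lincomb a B = 0\<^sub>v N"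
    proof (rule eq_vecI)
      fix p assume "p < dim_vec (0\<^sub>v N :: complex vec)"
      then have p: "p < N" by simp
      have "VS.lincomb a B $ p = (\<Sum>i<N-d. co i * xs ! i $ p)"
        unfolding lincomb_ent[OF p] using a_xs by (intro sum.cong) auto
      then show "VS.lincomb a B $ p = 0\<^sub>v N $ p" using zero p by simp
    qed (use VS.lincomb_closed[OF Bcar] in auto)
    then have "a \<in> B \<rightarrow> {0}" using VS.not_lindepD[OF B(3) B(2) subset_refl] by auto
    then show "co i = 0" using funcset_mem[of a B "{0}", OF _ xs_B[OF i]] a_xs[OF i] by simp
  next
    fix w :: "nat \<Rightarrow> complex" assume "\<forall>i'<d. sprod {..<N} (phi i') w = 0"
    then have "vec N w \<in> perp_set N d phi" by (simp add: perp_set_def sprod_vec_right)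
    then have "vec N w \<in> VS.span B" using B(4) by auto
    then obtain b where wb: "vec N w = VS.lincomb b B" using VS.finite_span[OF B(2) Bcar] by auto
    have "w p = (\<Sum>i<N-d. b (xs ! i) * xs ! i $ p)" if "p < N" for p
      using lincomb_ent[OF that, of b] arg_cong[OF wb, of "\<lambda>v. v $ p"] that by simp
    then show "\<exists>co. \<forall>p<N. w p = (\<Sum>i<N-d. co i * xs ! i $ p)"
      by (intro exI[of _ "\<lambda>i. b (xs ! i)"]) blast
  qed
qed

end

section \<open>Slices of a tensor and their Gram matrix\<close>

lemma inner2_eq_sprod: "inner2 b c u v = sprod ({..<b} \<times> {..<c}) (\<lambda>(j, l). u j l) (\<lambda>(j, l). v j l)"
  unfolding inner2_def sprod_def by (simp add: sum.cartesian_product split_def)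

text \<open>The Gram matrix of the slices Phi i is the (transposed) reduced density operator; we only need
  that it is invertible, and the consequence that the slices have a biorthogonal family.\<close>
definition gram_invertible :: "nat \<Rightarrow> nat \<Rightarrow> nat \<Rightarrow> tensor3 \<Rightarrow> bool" where
  "gram_invertible a b c Phi \<longleftrightarrow> (\<exists>G. inv_pair a (\<lambda>i m. inner2 b c (Phi m) (Phi i)) G)"

definition dual_family :: "nat \<Rightarrow> nat \<Rightarrow> nat \<Rightarrow> tensor3 \<Rightarrow> bool" where
  "dual_family a b c Phi \<longleftrightarrow> (\<exists>R. \<forall>i<a. \<forall>i'<a. inner2 b c (R i') (Phi i) = delta i i')"

lemma gram_invertible_of_rank:
  assumes "rank_rho_A1 a b c Phi = a"
  shows "gram_invertible a b c Phi"
proof -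
  interpret V: vec_space "TYPE(complex)" a .
  define M where "M = reduced_A1 a b c Phi"
  have M: "M \<in> carrier_mat a a" unfolding M_def reduced_A1_def by simp
  have "det M \<noteq> 0" using assms V.det_rank_iff[OF M] unfolding rank_rho_A1_def M_def by simp
  from det_non_zero_imp_unit[OF M this, of undefined]
  obtain M' where M': "M' \<in> carrier_mat a a" "M * M' = 1\<^sub>m a"
    unfolding Units_def ring_mat_simps by auto
  have M_ent: "M $$ (i, m) = inner2 b c (Phi m) (Phi i)" if "i < a" "m < a" for i m
    using that unfolding M_def reduced_A1_def inner2_def by (simp add: mult.commute)
  have "mmul a (\<lambda>i m. inner2 b c (Phi m) (Phi i)) (\<lambda>i j. M' $$ (i, j)) i j = delta i j"
    if "i < a" "j < a" for i j
  proof -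
    have "(M * M') $$ (i, j) = (\<Sum>m<a. M $$ (i, m) * M' $$ (m, j))"
      using that M M'(1) by (simp add: scalar_prod_def atLeast0LessThan)
    also have "\<dots> = mmul a (\<lambda>i m. inner2 b c (Phi m) (Phi i)) (\<lambda>i j. M' $$ (i, j)) i j"
      unfolding mmul_def using M_ent that by (intro sum.cong) auto
    finally show ?thesis using M' that by (simp add: delta_def)
  qed
  then show ?thesis unfolding gram_invertible_def using inv_pair_right_inverse by blast
qed

lemma dual_family_of_gram:
  assumes "gram_invertible a b c Phi"
  shows "dual_family a b c Phi"
proof -
  obtain G where G: "inv_pair a (\<lambda>i m. inner2 b c (Phi m) (Phi i)) G"
    using assms unfolding gram_invertible_def by blast
  define R where "R i' = (\<lambda>j l. \<Sum>m<a. cnj (G m i') * Phi m j l)" for i'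
  have "inner2 b c (R i') (Phi i) = delta i i'" if "i < a" "i' < a" for i i'
  proof -
    have "inner2 b c (R i') (Phi i) = mmul a (\<lambda>i m. inner2 b c (Phi m) (Phi i)) G i i'"
      unfolding R_def inner2_lin_left mmul_def by (simp add: mult.commute)
    then show ?thesis using G that unfolding inv_pair_def by simp
  qed
  then show ?thesis unfolding dual_family_def by blast
qed

lemma span_of_perp_perp:
  assumes Phi: "in_tensor3 a b c Phi" "gram_invertible a b c Phi"
    and w: "in_tensor2 b c w"
    and perp: "\<And>x. in_tensor2 b c x \<Longrightarrow> \<forall>i<a. inner2 b c (Phi i) x = 0 \<Longrightarrow> inner2 b c x w = 0"
  shows "\<exists>co. w = (\<lambda>j l. \<Sum>i<a. co i * Phi i j l)"
proof -
  let ?P = "{..<b} \<times> {..<c}"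
  let ?phi = "\<lambda>i (j, l). Phi i j l"
  obtain G where "inv_pair a (\<lambda>i m. inner2 b c (Phi m) (Phi i)) G"
    using Phi(2) unfolding gram_invertible_def by blast
  then have G: "inv_pair a (\<lambda>i m. sprod ?P (?phi m) (?phi i)) G" unfolding inner2_eq_sprod .
  have "sprod ?P x (\<lambda>(j, l). w j l) = 0" if x: "\<forall>i<a. sprod ?P (?phi i) x = 0" for x
  proof -
    define x2 where "x2 j l = (if j < b \<and> l < c then x (j, l) else 0)" for j l
    have x2: "sprod ?P u (\<lambda>(j, l). x2 j l) = sprod ?P u x" "sprod ?P (\<lambda>(j, l). x2 j l) u = sprod ?P x u" for u
      unfolding sprod_def x2_def by (auto intro!: sum.cong)
    have "in_tensor2 b c x2" unfolding in_tensor2_def x2_def by auto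
    moreover have "\<forall>i<a. inner2 b c (Phi i) x2 = 0" using x unfolding inner2_eq_sprod x2 by blast
    ultimately have "inner2 b c x2 w = 0" by (rule perp)
    then show ?thesis unfolding inner2_eq_sprod x2 .
  qed
  then obtain co where co: "\<And>p. p \<in> ?P \<Longrightarrow> (\<lambda>(j, l). w j l) p = (\<Sum>i<a. co i * ?phi i p)"
    using gram_perp_perp[OF _ G] by blast
  have "w j l = (\<Sum>i<a. co i * Phi i j l)" for j l
    using co[of "(j, l)"] w Phi(1) unfolding in_tensor2_def in_tensor3_def by (cases "j < b \<and> l < c") auto
  then show ?thesis by blast
qed

lemma slocc_equiv_iff:
  "slocc_equiv a b c T S \<longleftrightarrow>
   (\<exists>f1 g1 f2 g2 f3 g3. inv_pair a f1 g1 \<and> inv_pair b f2 g2 \<and> inv_pair c f3 g3 \<and> S = lop a b c f1 f2 f3 T)"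
proof
  assume "slocc_equiv a b c T S"
  then obtain L1 L2 L3 where L: "L1 \<in> carrier_mat a a" "invertible_mat L1" "L2 \<in> carrier_mat b b"
      "invertible_mat L2" "L3 \<in> carrier_mat c c" "invertible_mat L3" and S: "S = local_op a b c L1 L2 L3 T"
    unfolding slocc_equiv_def by blast
  then show "\<exists>f1 g1 f2 g2 f3 g3. inv_pair a f1 g1 \<and> inv_pair b f2 g2 \<and> inv_pair c f3 g3 \<and> S = lop a b c f1 f2 f3 T"
    using inv_pair_of_invertible[OF L(1,2)] inv_pair_of_invertible[OF L(3,4)] inv_pair_of_invertible[OF L(5,6)]
    unfolding local_op_eq_lop by blast
next
  assume "\<exists>f1 g1 f2 g2 f3 g3. inv_pair a f1 g1 \<and> inv_pair b f2 g2 \<and> inv_pair c f3 g3 \<and> S = lop a b c f1 f2 f3 T"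
  then obtain f1 g1 f2 g2 f3 g3 where f: "inv_pair a f1 g1" "inv_pair b f2 g2" "inv_pair c f3 g3"
    and S: "S = lop a b c f1 f2 f3 T" by blast
  have "S = local_op a b c (mat_of_fun a f1) (mat_of_fun b f2) (mat_of_fun c f3) T"
    unfolding S local_op_eq_lop by (rule lop_cong) (simp_all add: mat_of_fun_def)
  then show "slocc_equiv a b c T S"
    unfolding slocc_equiv_def
    using invertible_of_inv_pair[OF f(1)] invertible_of_inv_pair[OF f(2)] invertible_of_inv_pair[OF f(3)]
      mat_of_fun_carrier by blast
qed

lemma slocc_refl: "in_tensor3 a b c T \<Longrightarrow> slocc_equiv a b c T T"
  unfolding slocc_equiv_iff using inv_pair_delta lop_id by metis

lemma slocc_trans:
  assumes "slocc_equiv a b c T S" "slocc_equiv a b c S U"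
  shows "slocc_equiv a b c T U"
proof -
  obtain f1 g1 f2 g2 f3 g3 where f: "inv_pair a f1 g1" "inv_pair b f2 g2" "inv_pair c f3 g3"
    and S: "S = lop a b c f1 f2 f3 T"
    using assms(1) unfolding slocc_equiv_iff by blast
  obtain h1 k1 h2 k2 h3 k3 where h: "inv_pair a h1 k1" "inv_pair b h2 k2" "inv_pair c h3 k3"
    and U: "U = lop a b c h1 h2 h3 S"
    using assms(2) unfolding slocc_equiv_iff by blast
  have "U = lop a b c (mmul a h1 f1) (mmul b h2 f2) (mmul c h3 f3) T" unfolding U S lop_comp ..
  then show ?thesis unfolding slocc_equiv_iff using inv_pair_mmul h f by blast
qed

lemma slocc_sym:
  assumes "slocc_equiv a b c T S" "in_tensor3 a b c T"
  shows "slocc_equiv a b c S T"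
proof -
  obtain f1 g1 f2 g2 f3 g3 where f: "inv_pair a f1 g1" "inv_pair b f2 g2" "inv_pair c f3 g3"
    and S: "S = lop a b c f1 f2 f3 T"
    using assms(1) unfolding slocc_equiv_iff by blast
  have "lop a b c g1 g2 g3 S = lop a b c (mmul a g1 f1) (mmul b g2 f2) (mmul c g3 f3) T"
    unfolding S lop_comp ..
  also have "\<dots> = lop a b c delta delta delta T"
    by (rule lop_cong) (use f in \<open>auto simp: inv_pair_def\<close>)
  also have "\<dots> = T" by (rule lop_id[OF assms(2)])
  finally show ?thesis unfolding slocc_equiv_iff using f inv_pair_sym by metis
qed

lemma lop_inverse:
  assumes "inv_pair a f1 g1" "inv_pair b f2 g2" "inv_pair c f3 g3" "in_tensor3 a b c T"
  shows "lop a b c g1 g2 g3 (lop a b c f1 f2 f3 T) = T"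
proof -
  have "lop a b c g1 g2 g3 (lop a b c f1 f2 f3 T) = lop a b c delta delta delta T"
    unfolding lop_comp by (rule lop_cong) (use assms in \<open>auto simp: inv_pair_def\<close>)
  then show ?thesis using lop_id[OF assms(4)] by simp
qed

lemma lop_first_slice:
  "in_tensor3 a b c T \<Longrightarrow> i < a \<Longrightarrow> lop a b c A delta delta T i = (\<lambda>j l. \<Sum>m<a. A i m * T m j l)"
  by (simp add: lop_slice op2_id slice_in_tensor2)

text \<open>Pairing f2 (x) f3 with the inverse adjoint madj g2 (x) madj g3 preserves inner products:
  the transformation rule for orthogonal complements.\<close>
lemma inner2_contragredient:
  assumes "inv_pair b f2 g2" "inv_pair c f3 g3" "in_tensor2 b c v"
  shows "inner2 b c (op2 b c f2 f3 u) (op2 b c (madj g2) (madj g3) v) = inner2 b c u v"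
    and "inner2 b c (op2 b c (madj g2) (madj g3) u) (op2 b c f2 f3 v) = inner2 b c u v"
proof -
  show "inner2 b c (op2 b c f2 f3 u) (op2 b c (madj g2) (madj g3) v) = inner2 b c u v"
    unfolding inner2_adj
    using op2_inverse[OF inv_pair_madj[OF assms(1)] inv_pair_madj[OF assms(2)] assms(3)] by simp
  show "inner2 b c (op2 b c (madj g2) (madj g3) u) (op2 b c f2 f3 v) = inner2 b c u v"
    unfolding inner2_adj madj_madj using op2_inverse[OF assms] by simp
qed

lemma dual_family_local:
  assumes "dual_family a b c Psi" "in_tensor3 a b c Psi" "inv_pair b f2 g2" "inv_pair c f3 g3"
  shows "dual_family a b c (lop a b c delta f2 f3 Psi)"
proof -
  obtain R where R: "\<And>i i'. i < a \<Longrightarrow> i' < a \<Longrightarrow> inner2 b c (R i') (Psi i) = delta i i'"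
    using assms(1) unfolding dual_family_def by blast
  have "inner2 b c (op2 b c (madj g2) (madj g3) (R i')) (lop a b c delta f2 f3 Psi i) = delta i i'"
    if "i < a" "i' < a" for i i'
  proof -
    have "inner2 b c (op2 b c (madj g2) (madj g3) (R i')) (lop a b c delta f2 f3 Psi i)
        = inner2 b c (op2 b c (madj g2) (madj g3) (R i')) (op2 b c f2 f3 (Psi i))"
      by (simp only: lop_slice_delta[OF that(1)])
    also have "\<dots> = inner2 b c (R i') (Psi i)"
      by (rule inner2_contragredient(2)[OF assms(3,4) slice_in_tensor2[OF assms(2)]])
    finally show ?thesis using R[OF that] by simp
  qed
  then show ?thesis unfolding dual_family_def
    by (intro exI[of _ "\<lambda>i'. op2 b c (madj g2) (madj g3) (R i')"]) simp
qed

section \<open>Representatives of T^{A1}\<close>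

lemma T_repI:
  assumes "in_tensor3 k b c X"
    and "\<And>i i'. i < k \<Longrightarrow> i' < a \<Longrightarrow> inner2 b c (Phi i') (X i) = 0"
    and "\<And>co i. \<forall>j<b. \<forall>l<c. (\<Sum>i<k. co i * X i j l) = 0 \<Longrightarrow> i < k \<Longrightarrow> co i = 0"
    and "\<And>w. in_tensor2 b c w \<Longrightarrow> \<forall>i'<a. inner2 b c (Phi i') w = 0 \<Longrightarrow>
           \<exists>co. w = (\<lambda>j l. \<Sum>i<k. co i * X i j l)"
  shows "T_rep a b c k Phi X"
proof (unfold T_rep_def, intro conjI allI impI)
  fix w assume w: "in_tensor2 b c w \<and> (\<forall>i'<a. inner2 b c (Phi i') w = 0)"
  obtain co where "w = (\<lambda>j l. \<Sum>i<k. co i * X i j l)" using assms(4)[OF conjunct1[OF w] conjunct2[OF w]] ..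
  then show "\<exists>coef. \<forall>j l. w j l = (\<Sum>i<k. coef i * X i j l)" by (intro exI[of _ co]) simp
qed (use assms(1-3) in auto)

lemma T_repD:
  assumes "T_rep a b c k Phi X"
  shows "in_tensor3 k b c X"
    and "\<And>i i'. i < k \<Longrightarrow> i' < a \<Longrightarrow> inner2 b c (Phi i') (X i) = 0"
    and "\<And>co i. \<forall>j<b. \<forall>l<c. (\<Sum>i<k. co i * X i j l) = 0 \<Longrightarrow> i < k \<Longrightarrow> co i = 0"
    and "\<And>w. in_tensor2 b c w \<Longrightarrow> \<forall>i'<a. inner2 b c (Phi i') w = 0 \<Longrightarrow>
           \<exists>co. w = (\<lambda>j l. \<Sum>i<k. co i * X i j l)"
proof -
  note parts = assms[unfolded T_rep_def]
  show "in_tensor3 k b c X" using parts by (elim conjE)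
  show "inner2 b c (Phi i') (X i) = 0" if "i < k" "i' < a" for i i'
    using parts that by (elim conjE) simp
  show "co i = 0" if "\<forall>j<b. \<forall>l<c. (\<Sum>i<k. co i * X i j l) = 0" "i < k" for co i
    using parts that by (elim conjE) blast
  show "\<exists>co. w = (\<lambda>j l. \<Sum>i<k. co i * X i j l)"
    if w: "in_tensor2 b c w" "\<forall>i'<a. inner2 b c (Phi i') w = 0" for w
  proof -
    have "\<forall>w. in_tensor2 b c w \<and> (\<forall>i'<a. inner2 b c (Phi i') w = 0) \<longrightarrow>
            (\<exists>coef. \<forall>j l. w j l = (\<Sum>i<k. coef i * X i j l))"
      using parts by (elim conjE)
    then have "\<exists>coef. \<forall>j l. w j l = (\<Sum>i<k. coef i * X i j l)" using w by blast
    then obtain co where "\<forall>j l. w j l = (\<Sum>i<k. co i * X i j l)" ..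
    then show ?thesis by (intro exI[of _ co] ext) simp
  qed
qed

text \<open>A representative of Phi stays one when the slices of Phi are recombined invertibly: the span
  of the slices, hence its orthogonal complement, does not change.\<close>
lemma rep_first_factor:
  assumes X: "T_rep a b c k Phi X" and A: "inv_pair a A A'" and Phi: "in_tensor3 a b c Phi"
  shows "T_rep a b c k (lop a b c A delta delta Phi) X"
proof -
  let ?Psi = "lop a b c A delta delta Phi"
  have Psi_slice: "?Psi i = (\<lambda>j l. \<Sum>m<a. A i m * Phi m j l)" if "i < a" for i
    using lop_first_slice[OF Phi that] .
  have "lop a b c A' delta delta ?Psi = Phi"
    using lop_inverse[OF A inv_pair_delta inv_pair_delta Phi] .
  then have Phi_slice: "Phi m = (\<lambda>j l. \<Sum>i<a. A' m i * ?Psi i j l)" if "m < a" for m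
    using lop_first_slice[OF lop_in_tensor3[of a b c A delta delta Phi] that, of A'] by simp
  show ?thesis
  proof (rule T_repI)
    show "inner2 b c (?Psi i') (X i) = 0" if "i < k" "i' < a" for i i'
      using T_repD(2)[OF X that(1)] unfolding Psi_slice[OF that(2)] inner2_lin_left by simp
    show "\<exists>co. w = (\<lambda>j l. \<Sum>i<k. co i * X i j l)"
      if "in_tensor2 b c w" "\<forall>i'<a. inner2 b c (?Psi i') w = 0" for w
    proof -
      have "inner2 b c (Phi m) w = 0" if "m < a" for m
        using \<open>\<forall>i'<a. inner2 b c (?Psi i') w = 0\<close> unfolding Phi_slice[OF that] inner2_lin_left by simp
      then show ?thesis by (intro T_repD(4)[OF X \<open>in_tensor2 b c w\<close>]) simp
    qed
  qed (use T_repD(1,3)[OF X] in auto)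
qed

lemma rep_local:
  assumes X: "T_rep a b c k Phi X" and f: "inv_pair b f2 g2" "inv_pair c f3 g3"
  shows "T_rep a b c k (lop a b c delta f2 f3 Phi) (lop k b c delta (madj g2) (madj g3) X)"
proof -
  let ?Psi = "lop a b c delta f2 f3 Phi" and ?X' = "lop k b c delta (madj g2) (madj g3) X"
  let ?h = "op2 b c (madj g2) (madj g3)" and ?h' = "op2 b c (madj f2) (madj f3)"
  let ?comb = "\<lambda>co. (\<lambda>j l. \<Sum>i<k. co i * X i j l)"
  have Xin: "in_tensor3 k b c X" by (rule T_repD(1)[OF X])
  have comb_in: "in_tensor2 b c (?comb co)" for co
    using Xin unfolding in_tensor2_def in_tensor3_def by simp
  have X'_slice: "?X' i = ?h (X i)" if "i < k" for i using that by (rule lop_slice_delta)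
  have h_inv: "?h (?h' w) = w" if "in_tensor2 b c w" for w
    using op2_inverse[OF inv_pair_madj[OF inv_pair_sym[OF f(1)]] inv_pair_madj[OF inv_pair_sym[OF f(2)]] that]
    by simp
  have comb: "(\<lambda>j l. \<Sum>i<k. co i * ?X' i j l) = ?h (?comb co)" for co
    unfolding op2_lin using X'_slice by (intro ext sum.cong) auto
  show ?thesis
  proof (rule T_repI)
    show "inner2 b c (?Psi i') (?X' i) = 0" if "i < k" "i' < a" for i i'
    proof -
      have "inner2 b c (?Psi i') (?X' i) = inner2 b c (op2 b c f2 f3 (Phi i')) (?h (X i))"
        by (simp only: X'_slice[OF \<open>i < k\<close>] lop_slice_delta[OF \<open>i' < a\<close>])
      also have "\<dots> = inner2 b c (Phi i') (X i)"
        by (rule inner2_contragredient(1)[OF f slice_in_tensor2[OF Xin]])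
      finally show ?thesis using T_repD(2)[OF X that] by simp
    qed
    show "co i = 0" if zero: "\<forall>j<b. \<forall>l<c. (\<Sum>i<k. co i * ?X' i j l) = 0" and "i < k" for co i
    proof -
      have "(\<Sum>i<k. co i * ?X' i j l) = ?h (?comb co) j l" for j l
        using fun_cong[OF fun_cong[OF comb[of co]], of j l] by simp
      then have "\<forall>j<b. \<forall>l<c. ?h (?comb co) j l = 0" using zero by simp
      from op2_kernel[OF inv_pair_madj[OF f(1)] inv_pair_madj[OF f(2)] comb_in this]
      show ?thesis using T_repD(3)[OF X _ \<open>i < k\<close>] by simp
    qed
    show "\<exists>co. w = (\<lambda>j l. \<Sum>i<k. co i * ?X' i j l)"
      if w: "in_tensor2 b c w" "\<forall>i'<a. inner2 b c (?Psi i') w = 0" for w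
    proof -
      have perp: "\<forall>i'<a. inner2 b c (Phi i') (?h' w) = 0"
      proof (intro allI impI)
        fix i' assume "i' < a"
        have "inner2 b c (Phi i') (?h' w) = inner2 b c (op2 b c f2 f3 (Phi i')) w"
          by (rule inner2_adj[symmetric])
        also have "\<dots> = inner2 b c (?Psi i') w" by (simp only: lop_slice_delta[OF \<open>i' < a\<close>])
        finally show "inner2 b c (Phi i') (?h' w) = 0" using w(2) \<open>i' < a\<close> by simp
      qed
      obtain co where co: "?h' w = ?comb co" using T_repD(4)[OF X op2_in_tensor2 perp] by (rule exE)
      have "w = ?h (?h' w)" using h_inv[OF w(1)] by (rule sym)
      also have "\<dots> = ?h (?comb co)" by (simp only: co)
      also have "\<dots> = (\<lambda>j l. \<Sum>i<k. co i * ?X' i j l)" by (rule comb[symmetric])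
      finally show ?thesis by (intro exI[of _ co])
    qed
  qed (rule lop_in_tensor3)
qed

lemma rep_basis_change:
  assumes X: "T_rep a b c k Phi X" and M: "inv_pair k M M'"
  shows "T_rep a b c k Phi (lop k b c M delta delta X)"
proof -
  let ?X' = "lop k b c M delta delta X"
  have X'_slice: "?X' i = (\<lambda>j l. \<Sum>m<k. M i m * X m j l)" if "i < k" for i
    using lop_first_slice[OF T_repD(1)[OF X] that] .
  have comb: "(\<Sum>i<k. co i * ?X' i j l) = (\<Sum>m<k. (\<Sum>i<k. co i * M i m) * X m j l)" for co j l
  proof -
    have "(\<Sum>i<k. co i * ?X' i j l) = (\<Sum>i<k. \<Sum>m<k. co i * M i m * X m j l)"
      using X'_slice by (intro sum.cong) (simp_all add: sum_distrib_left mult.assoc)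
    also have "\<dots> = (\<Sum>m<k. \<Sum>i<k. co i * M i m * X m j l)" by (rule sum.swap)
    finally show ?thesis by (simp add: sum_distrib_right)
  qed
  show ?thesis
  proof (rule T_repI)
    show "inner2 b c (Phi i') (?X' i) = 0" if "i < k" "i' < a" for i i'
      using T_repD(2)[OF X _ that(2)] unfolding X'_slice[OF that(1)] inner2_lin_right by simp
    show "co i = 0" if zero: "\<forall>j<b. \<forall>l<c. (\<Sum>i<k. co i * ?X' i j l) = 0" and "i < k" for co i
    proof (rule inv_pair_row_zero[OF M _ \<open>i < k\<close>])
      fix m assume "m < k"
      show "(\<Sum>i<k. co i * M i m) = 0"
        by (rule T_repD(3)[OF X _ \<open>m < k\<close>]) (use zero in \<open>simp add: comb\<close>)
    qed
    show "\<exists>co. w = (\<lambda>j l. \<Sum>i<k. co i * ?X' i j l)"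
      if w_perp: "in_tensor2 b c w" "\<forall>i'<a. inner2 b c (Phi i') w = 0" for w
    proof -
      obtain co where w: "w = (\<lambda>j l. \<Sum>m<k. co m * X m j l)" using T_repD(4)[OF X w_perp] ..
      define co' where "co' i = (\<Sum>m<k. co m * M' m i)" for i
      have co': "(\<Sum>i<k. co' i * M i m) = co m" if "m < k" for m
        unfolding co'_def by (rule inv_pair_row_cancel[OF M that])
      have "w = (\<lambda>j l. \<Sum>i<k. co' i * ?X' i j l)"
        unfolding w comb using co' by (intro ext sum.cong) auto
      then show ?thesis by (intro exI[of _ co'])
    qed
  qed (rule lop_in_tensor3)
qed

text \<open>If a tensor has a common representative with Phi, each of its slices is orthogonal to the
  complement of the slices of Phi, hence lies in their span.\<close>
lemma slice_in_span_of_common_rep: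
  assumes X_Phi: "T_rep a b c k Phi X" and X_Psi: "T_rep a b c k Psi X"
    and Phi: "in_tensor3 a b c Phi" "gram_invertible a b c Phi" and Psi: "in_tensor3 a b c Psi"
    and "m < a"
  shows "\<exists>co. Psi m = (\<lambda>j l. \<Sum>i<a. co i * Phi i j l)"
proof (rule span_of_perp_perp[OF Phi slice_in_tensor2[OF Psi]])
  fix x assume x: "in_tensor2 b c x" "\<forall>i<a. inner2 b c (Phi i) x = 0"
  obtain co where "x = (\<lambda>j l. \<Sum>i<k. co i * X i j l)" using T_repD(4)[OF X_Phi x] by (rule exE)
  then have "inner2 b c x (Psi m) = (\<Sum>i<k. cnj (co i) * inner2 b c (X i) (Psi m))"
    by (simp only: inner2_lin_left)
  also have "\<dots> = 0"
    using T_repD(2)[OF X_Psi _ \<open>m < a\<close>] by (simp add: inner2_cnj[of b c "X _"])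
  finally show "inner2 b c x (Psi m) = 0" .
qed

lemma lop_first_of_slices:
  assumes "in_tensor3 a b c Phi" "in_tensor3 a b c Psi"
    and C: "\<And>m. m < a \<Longrightarrow> Psi m = (\<lambda>j l. \<Sum>i<a. C m i * Phi i j l)"
  shows "Psi = lop a b c C delta delta Phi"
proof (rule ext)
  fix m
  show "Psi m = lop a b c C delta delta Phi m"
  proof (cases "m < a")
    case True
    then show ?thesis using C lop_first_slice[OF assms(1) True] by simp
  next
    case False
    then show ?thesis using assms(2) unfolding lop_def in_tensor3_def by (intro ext) simp
  qed
qed

lemma coefficients_invertible:
  assumes "dual_family a b c Psi"
    and C: "\<And>m. m < a \<Longrightarrow> Psi m = (\<lambda>j l. \<Sum>i<a. C m i * Phi i j l)"
  shows "\<exists>D. inv_pair a C D"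
proof -
  obtain R where R: "\<And>i i'. i < a \<Longrightarrow> i' < a \<Longrightarrow> inner2 b c (R i') (Psi i) = delta i i'"
    using assms(1) unfolding dual_family_def by blast
  define D where "D i m = inner2 b c (R m) (Phi i)" for i m
  have "inv_pair a C D"
  proof (rule inv_pair_right_inverse)
    fix m m' assume "m < a" "m' < a"
    have "mmul a C D m m' = inner2 b c (R m') (\<lambda>j l. \<Sum>i<a. C m i * Phi i j l)"
      unfolding mmul_def D_def inner2_lin_right ..
    also have "\<dots> = delta m m'" using R[OF \<open>m < a\<close> \<open>m' < a\<close>] C[OF \<open>m < a\<close>] by simp
    finally show "mmul a C D m m' = delta m m'" .
  qed
  then show ?thesis by blast
qed

lemma rep_unique:
  assumes X_Phi: "T_rep a b c k Phi X" and X_Psi: "T_rep a b c k Psi X"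
    and Phi: "in_tensor3 a b c Phi" "gram_invertible a b c Phi"
    and Psi: "in_tensor3 a b c Psi" "dual_family a b c Psi"
  shows "\<exists>C D. inv_pair a C D \<and> Psi = lop a b c C delta delta Phi"
proof -
  have "\<exists>co. m < a \<longrightarrow> Psi m = (\<lambda>j l. \<Sum>i<a. co i * Phi i j l)" for m
  proof (cases "m < a")
    case True
    from slice_in_span_of_common_rep[OF X_Phi X_Psi Phi Psi(1) True]
    obtain co where "Psi m = (\<lambda>j l. \<Sum>i<a. co i * Phi i j l)" ..
    then show ?thesis by (intro exI[of _ co]) simp
  qed simp
  then have "\<forall>m. \<exists>co. m < a \<longrightarrow> Psi m = (\<lambda>j l. \<Sum>i<a. co i * Phi i j l)" by (intro allI)
  from choice[OF this] obtain C where "\<forall>m. m < a \<longrightarrow> Psi m = (\<lambda>j l. \<Sum>i<a. C m i * Phi i j l)" ..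
  then have C: "\<And>m. m < a \<Longrightarrow> Psi m = (\<lambda>j l. \<Sum>i<a. C m i * Phi i j l)" by blast
  obtain D where "inv_pair a C D" using coefficients_invertible[OF Psi(2) C] by blast
  then show ?thesis using lop_first_of_slices[OF Phi(1) Psi(1) C] by blast
qed

text \<open>Flattening C^b (x) C^c to C^(bc) via (j, l) |-> j * c + l.\<close>
lemma sum_flat:
  fixes b c :: nat
  assumes "0 < c"
  shows "(\<Sum>p<b * c. f (p div c) (p mod c)) = (\<Sum>j<b. \<Sum>l<c. f j l)"
proof -
  have "(\<Sum>p<b * c. f (p div c) (p mod c)) = (\<Sum>j<b. \<Sum>p\<in>{j * c..<j * c + c}. f (p div c) (p mod c))"
    by (rule sum.nat_group[symmetric])
  also have "\<dots> = (\<Sum>j<b. \<Sum>l<c. f j l)"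
  proof (rule sum.cong[OF refl])
    fix j
    have "(\<Sum>p\<in>{j * c..<j * c + c}. f (p div c) (p mod c)) = (\<Sum>l\<in>{0..<c}. f ((l + j * c) div c) ((l + j * c) mod c))"
      using sum.shift_bounds_nat_ivl[of "\<lambda>p. f (p div c) (p mod c)" 0 "j * c" c] by (simp add: add.commute)
    also have "\<dots> = (\<Sum>l<c. f j l)" using assms by (intro sum.cong) (auto simp: atLeast0LessThan)
    finally show "(\<Sum>p\<in>{j * c..<j * c + c}. f (p div c) (p mod c)) = (\<Sum>l<c. f j l)" .
  qed
  finally show ?thesis .
qed

definition flat :: "nat \<Rightarrow> tensor2 \<Rightarrow> nat \<Rightarrow> complex" where
  "flat c w p = w (p div c) (p mod c)"

lemma flat_index:
  fixes b c :: nat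
  assumes "0 < c"
  shows "\<And>p. p < b * c \<Longrightarrow> p div c < b \<and> p mod c < c"
    and "\<And>j l. j < b \<Longrightarrow> l < c \<Longrightarrow> j * c + l < b * c \<and> (j * c + l) div c = j \<and> (j * c + l) mod c = l"
proof -
  show "p div c < b \<and> p mod c < c" if "p < b * c" for p
    using that assms by (auto simp: less_mult_imp_div_less)
  show "j * c + l < b * c \<and> (j * c + l) div c = j \<and> (j * c + l) mod c = l" if "j < b" "l < c" for j l
  proof -
    have "j * c + l < (j + 1) * c" using that by simp
    also have "\<dots> \<le> b * c" using that by (intro mult_le_mono1) simp
    finally show ?thesis using that by auto
  qed
qed

lemma sprod_flat: "0 < c \<Longrightarrow> sprod {..<b * c} (flat c u) (flat c w) = inner2 b c u w"
  unfolding sprod_def inner2_def flat_def by (rule sum_flat)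

lemma rep_of_flat_basis:
  fixes x :: "nat \<Rightarrow> nat \<Rightarrow> complex"
  assumes c: "0 < c"
    and x_perp: "\<forall>i<k. \<forall>i'<a. sprod {..<b * c} (flat c (Phi i')) (x i) = 0"
    and x_indep: "\<forall>co. (\<forall>p<b * c. (\<Sum>i<k. co i * x i p) = 0) \<longrightarrow> (\<forall>i<k. co i = 0)"
    and x_span: "\<forall>w. (\<forall>i'<a. sprod {..<b * c} (flat c (Phi i')) w = 0) \<longrightarrow>
                       (\<exists>co. \<forall>p<b * c. w p = (\<Sum>i<k. co i * x i p))"
  defines "X \<equiv> \<lambda>i j l. if i < k \<and> j < b \<and> l < c then x i (j * c + l) else 0"
  shows "T_rep a b c k Phi X"
proof -
  note idx = flat_index[OF c]
  have X_flat: "flat c (X i) p = x i p" if "p < b * c" "i < k" for i p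
  proof -
    have "p div c * c + p mod c = p" by simp
    then show ?thesis using that idx(1)[OF that(1)] unfolding X_def flat_def by simp
  qed
  have flat_sprod_X: "sprod {..<b * c} (flat c u) (x i) = inner2 b c u (X i)" if "i < k" for u i
  proof -
    have "sprod {..<b * c} (flat c u) (x i) = sprod {..<b * c} (flat c u) (flat c (X i))"
      unfolding sprod_def using X_flat that by (intro sum.cong) auto
    then show ?thesis unfolding sprod_flat[OF c] .
  qed
  show ?thesis
  proof (rule T_repI)
    show "in_tensor3 k b c X" unfolding in_tensor3_def X_def by auto
    show "inner2 b c (Phi i') (X i) = 0" if "i < k" "i' < a" for i i'
      using x_perp that unfolding flat_sprod_X[OF that(1), symmetric] by simp
    show "co i = 0" if zero: "\<forall>j<b. \<forall>l<c. (\<Sum>i<k. co i * X i j l) = 0" and "i < k" for co i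
    proof -
      have "(\<Sum>i<k. co i * x i p) = 0" if "p < b * c" for p
      proof -
        have "(\<Sum>i<k. co i * x i p) = (\<Sum>i<k. co i * X i (p div c) (p mod c))"
          using X_flat that unfolding flat_def by (intro sum.cong) auto
        then show ?thesis using zero idx(1)[OF that] by simp
      qed
      then have "\<forall>p<b * c. (\<Sum>i<k. co i * x i p) = 0" by blast
      then have "\<forall>i<k. co i = 0" by (rule mp[OF spec[OF x_indep, of co]])
      then show ?thesis using \<open>i < k\<close> by simp
    qed
    show "\<exists>co. w = (\<lambda>j l. \<Sum>i<k. co i * X i j l)"
      if w: "in_tensor2 b c w" "\<forall>i'<a. inner2 b c (Phi i') w = 0" for w
    proof -
      have "\<forall>i'<a. sprod {..<b * c} (flat c (Phi i')) (flat c w) = 0"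
        using w(2) unfolding sprod_flat[OF c] .
      from mp[OF spec[OF x_span, of "flat c w"] this]
      obtain co where co: "\<forall>p<b * c. flat c w p = (\<Sum>i<k. co i * x i p)" ..
      have "w j l = (\<Sum>i<k. co i * X i j l)" for j l
      proof (cases "j < b \<and> l < c")
        case True
        note jl = idx(2)[OF conjunct1[OF True] conjunct2[OF True]]
        then have "w j l = flat c w (j * c + l)" unfolding flat_def by simp
        also have "\<dots> = (\<Sum>i<k. co i * x i (j * c + l))" using co jl by simp
        also have "\<dots> = (\<Sum>i<k. co i * X i j l)" unfolding X_def using True by simp
        finally show ?thesis .
      next
        case False
        then show ?thesis using w(1) unfolding in_tensor2_def X_def by auto
      qed
      then show ?thesis by (intro exI[of _ co] ext)
    qed
  qed
qed

text \<open>Existence of a representative: the orthogonal complement of the slices has dimension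
  bc - a, computed in the flattened space.\<close>
lemma rep_exists:
  assumes c: "0 < c" and Phi: "gram_invertible a b c Phi" and k: "k = b * c - a"
  shows "\<exists>X. T_rep a b c k Phi X"
proof -
  obtain G where "inv_pair a (\<lambda>i m. inner2 b c (Phi m) (Phi i)) G"
    using Phi unfolding gram_invertible_def by blast
  then have "inv_pair a (\<lambda>i m. sprod {..<b * c} (flat c (Phi m)) (flat c (Phi i))) G"
    unfolding sprod_flat[OF c] .
  from perp_basis_flat[OF this] obtain x where
    "\<forall>i<k. \<forall>i'<a. sprod {..<b * c} (flat c (Phi i')) (x i) = 0"
    "\<forall>co. (\<forall>p<b * c. (\<Sum>i<k. co i * x i p) = 0) \<longrightarrow> (\<forall>i<k. co i = 0)"
    "\<forall>w. (\<forall>i'<a. sprod {..<b * c} (flat c (Phi i')) w = 0) \<longrightarrow>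
         (\<exists>co. \<forall>p<b * c. w p = (\<Sum>i<k. co i * x i p))"
    unfolding k[symmetric] by (elim exE conjE)
  from rep_of_flat_basis[OF c this] show ?thesis by blast
qed

text \<open>SLOCC equivalent tensors have the same class: transport a representative.\<close>
lemma T_A1_subset_of_slocc:
  assumes "slocc_equiv a b c Phi Psi"
  shows "T_A1 a b c k Phi \<subseteq> T_A1 a b c k Psi"
proof
  obtain f1 g1 f2 g2 f3 g3 where f: "inv_pair a f1 g1" "inv_pair b f2 g2" "inv_pair c f3 g3"
    and Psi: "Psi = lop a b c f1 f2 f3 Phi"
    using assms unfolding slocc_equiv_iff by blast
  fix Y assume "Y \<in> T_A1 a b c k Phi"
  then obtain X where X: "T_rep a b c k Phi X" and XY: "slocc_equiv k b c X Y"
    unfolding T_A1_def by blast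
  define X' where "X' = lop k b c delta (madj g2) (madj g3) X"
  have "lop a b c f1 delta delta (lop a b c delta f2 f3 Phi) = Psi"
    unfolding Psi lop_comp by (rule lop_cong) (simp_all add: mmul_delta_left mmul_delta_right)
  moreover have "T_rep a b c k (lop a b c f1 delta delta (lop a b c delta f2 f3 Phi)) X'"
    unfolding X'_def by (rule rep_first_factor[OF rep_local[OF X f(2,3)] f(1) lop_in_tensor3])
  moreover have "slocc_equiv k b c X' X"
  proof -
    have "lop k b c delta (madj f2) (madj f3) X' = X" unfolding X'_def
      by (rule lop_inverse[OF inv_pair_delta inv_pair_madj[OF f(2)] inv_pair_madj[OF f(3)] T_repD(1)[OF X]])
    then show ?thesis unfolding slocc_equiv_iff
      using inv_pair_delta inv_pair_madj[OF inv_pair_sym[OF f(2)]] inv_pair_madj[OF inv_pair_sym[OF f(3)]]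
      by metis
  qed
  ultimately show "Y \<in> T_A1 a b c k Psi"
    unfolding T_A1_def using slocc_trans[OF _ XY] by blast
qed

text \<open>Conversely, equal classes give SLOCC equivalence: a common representative X of Phi and of a
  transform of Psi forces the two to differ by an invertible operator on the first factor.\<close>
lemma slocc_of_equal_classes:
  assumes eq: "T_A1 a b c k Phi = T_A1 a b c k Psi" and X: "T_rep a b c k Phi X"
    and Phi: "in_tensor3 a b c Phi" "gram_invertible a b c Phi"
    and Psi: "in_tensor3 a b c Psi" "gram_invertible a b c Psi"
  shows "slocc_equiv a b c Phi Psi"
proof -
  have "X \<in> T_A1 a b c k Phi"
    unfolding T_A1_def using X slocc_refl[OF T_repD(1)[OF X]] by blast
  then have "X \<in> T_A1 a b c k Psi" using eq by simp
  then obtain X' where X': "T_rep a b c k Psi X'" and X'X: "slocc_equiv k b c X' X"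
    unfolding T_A1_def by blast
  obtain M1 M1' M2 M2' M3 M3' where M: "inv_pair k M1 M1'" "inv_pair b M2 M2'" "inv_pair c M3 M3'"
    and X_eq: "X = lop k b c M1 M2 M3 X'"
    using X'X unfolding slocc_equiv_iff by blast
  define Psi2 where "Psi2 = lop a b c delta (madj M2') (madj M3') Psi"
  have "T_rep a b c k Psi2 (lop k b c delta M2 M3 X')"
    using rep_local[OF X' inv_pair_madj[OF M(2)] inv_pair_madj[OF M(3)]] unfolding Psi2_def by simp
  moreover have "lop k b c M1 delta delta (lop k b c delta M2 M3 X') = X"
    unfolding X_eq lop_comp by (rule lop_cong) (simp_all add: mmul_delta_left mmul_delta_right)
  ultimately have X_Psi2: "T_rep a b c k Psi2 X" using rep_basis_change[OF _ M(1)] by metis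
  have "dual_family a b c Psi2"
    unfolding Psi2_def by (rule dual_family_local[OF dual_family_of_gram[OF Psi(2)] Psi(1)
      inv_pair_madj[OF M(2)] inv_pair_madj[OF M(3)]])
  moreover have "in_tensor3 a b c Psi2" unfolding Psi2_def by (rule lop_in_tensor3)
  ultimately obtain C D where CD: "inv_pair a C D" and Psi2_eq: "Psi2 = lop a b c C delta delta Phi"
    using rep_unique[OF X X_Psi2 Phi] by blast
  have "Psi = lop a b c delta (madj M2) (madj M3) Psi2"
    unfolding Psi2_def
    by (rule lop_inverse[OF inv_pair_delta inv_pair_madj[OF M(2)] inv_pair_madj[OF M(3)] Psi(1), symmetric])
  also have "\<dots> = lop a b c C (madj M2) (madj M3) Phi"
    unfolding Psi2_eq lop_comp by (rule lop_cong) (simp_all add: mmul_delta_left mmul_delta_right)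
  finally show ?thesis unfolding slocc_equiv_iff
    using CD inv_pair_madj[OF inv_pair_sym[OF M(2)]] inv_pair_madj[OF inv_pair_sym[OF M(3)]] by blast
qed

theorem mainTheorem9:
  fixes d1 d2 d3 k :: nat and Phi Psi :: tensor3
  assumes "d2 \<ge> 2" and "d3 \<ge> 2" and "k \<ge> 1"
    and "d1 = d2 * d3 - k" and "d1 \<ge> 1"
    and "in_tensor3 d1 d2 d3 Phi" and "in_tensor3 d1 d2 d3 Psi"
    and "rank_rho_A1 d1 d2 d3 Phi = d1" and "rank_rho_A1 d1 d2 d3 Psi = d1"
  shows "slocc_equiv d1 d2 d3 Phi Psi \<longleftrightarrow> T_A1 d1 d2 d3 k Phi = T_A1 d1 d2 d3 k Psi"
proof
  assume "slocc_equiv d1 d2 d3 Phi Psi"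
  then show "T_A1 d1 d2 d3 k Phi = T_A1 d1 d2 d3 k Psi"
    using T_A1_subset_of_slocc slocc_sym[OF _ assms(6)] by blast
next
  assume eq: "T_A1 d1 d2 d3 k Phi = T_A1 d1 d2 d3 k Psi"
  have gram: "gram_invertible d1 d2 d3 Phi" "gram_invertible d1 d2 d3 Psi"
    using gram_invertible_of_rank assms(8,9) by blast+
  have "0 < d3" "k = d2 * d3 - d1" using assms(2,4,5) by simp_all
  from rep_exists[OF this(1) gram(1) this(2)] obtain X where "T_rep d1 d2 d3 k Phi X" ..
  then show "slocc_equiv d1 d2 d3 Phi Psi"
    using slocc_of_equal_classes[OF eq _ assms(6) gram(1) assms(7) gram(2)] by blast
qed

end
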